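(* Let $d\ge 2$. If $G_P$ is a finitely constrained subgroup of $\mathrm{Aut}(X^* )$ defined by patterns of size $d$ with $\mathrm{Hdim}(G_P)=1-\frac{2}{2^{d-1}}$, then $G_P$ has additive portraits.
   Context: Let $X=\{0,1\}$ and let $X^*$ be the set of finite words over $X$, viewed as the rooted binary tree. $G=\mathrm{Aut}(X^* )$, and $G(d)$ is the automorphism group of the finite tree of words of length $\le d$. For $g\in G$ and $w\in X^*$ the section $g_w$ is defined by $g(wv)=g(w)g_w(v)$ (finite sections of elements of $G(d)$ likewise). $\pi_k$ denotes restriction to words of length $\le k$. $C_2=\{\mathrm{id},\sigma\}$ is written additively; $\alpha(g)=\sigma$ if $g(0)=1$ and $\mathrm{id}$ otherwise, and $\alpha_{(w)}(g)=\alpha(g_w)$. A subgroup $P\le G(d)$ is an essential pattern group if for every $p\in P$ and $i\in\{0,1\}$ there is $q\in P$ with $\pi_{d-1}(q)=p_i$; then $G_P=\{g\in G:\pi_d(g_w)\in P\ \forall w\in X^*\}$. Such groups are finitely constrained; defined by patterns of size $d$ means $d$ is minimal. $\mathrm{Hdim}(K)=\liminf_n \log_2|K(n)|/\log_2|G(n)|$ with $K(n)=\pi_n(K)$. The portrait map $\rho:G\to C_2^{X^*}$ is $\rho(g)_{(w)}=\alpha_{(w)}(g)$. A subgroup $H\le G$ has additive portraits if $\rho(H)$ is a subgroup of $C_2^{X^*}$ under pointwise addition. *)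

theory Defs
  imports "HOL-Library.Z2" "HOL-Library.Extended_Real" "HOL-Library.Sublist"
begin

text \<open>Words over X = {0,1} are bool lists (False = 0, True = 1). Elements of the finite group G(d) are
  represented by functions on all words that act as a tree automorphism on the words
  of length at most d and are the identity on longer words.\<close>

definition aut :: "(bool list \<Rightarrow> bool list) set" where
  "aut = {g. bij g \<and> (\<forall>w. length (g w) = length w)
             \<and> (\<forall>u v. prefix u v \<longrightarrow> prefix (g u) (g v))}"

definition words_le :: "nat \<Rightarrow> bool list set" where
  "words_le d = {w. length w \<le> d}"

definition aut_fin :: "nat \<Rightarrow> (bool list \<Rightarrow> bool list) set" where
  "aut_fin d = {p. bij_betw p (words_le d) (words_le d)
                  \<and> (\<forall>w. length (p w) = length w)
                  \<and> (\<forall>u v. length v \<le> d \<longrightarrow> prefix u v \<longrightarrow> prefix (p u) (p v))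
                  \<and> (\<forall>w. d < length w \<longrightarrow> p w = w)}"

definition restr :: "nat \<Rightarrow> (bool list \<Rightarrow> bool list) \<Rightarrow> (bool list \<Rightarrow> bool list)" where
  "restr k g = (\<lambda>w. if length w \<le> k then g w else w)"

text \<open>section: g(wv) = g(w) g_w(v)\<close>
definition sec :: "(bool list \<Rightarrow> bool list) \<Rightarrow> bool list \<Rightarrow> (bool list \<Rightarrow> bool list)" where
  "sec g w = (\<lambda>v. drop (length w) (g (w @ v)))"

definition subgroup_of_fin :: "nat \<Rightarrow> (bool list \<Rightarrow> bool list) set \<Rightarrow> bool" where
  "subgroup_of_fin d P \<longleftrightarrow> P \<subseteq> aut_fin d \<and> id \<in> P
     \<and> (\<forall>p\<in>P. \<forall>q\<in>P. p \<circ> q \<in> P) \<and> (\<forall>p\<in>P. inv p \<in> P)"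

definition essential_pattern_group :: "nat \<Rightarrow> (bool list \<Rightarrow> bool list) set \<Rightarrow> bool" where
  "essential_pattern_group d P \<longleftrightarrow> 1 \<le> d \<and> subgroup_of_fin d P
     \<and> (\<forall>p\<in>P. \<forall>i::bool. \<exists>q\<in>P. restr (d - 1) q = restr (d - 1) (sec p [i]))"

definition GP :: "nat \<Rightarrow> (bool list \<Rightarrow> bool list) set \<Rightarrow> (bool list \<Rightarrow> bool list) set" where
  "GP d P = {g \<in> aut. \<forall>w. restr d (sec g w) \<in> P}"

definition defined_by_patterns_of_size :: "nat \<Rightarrow> (bool list \<Rightarrow> bool list) set \<Rightarrow> bool" where
  "defined_by_patterns_of_size d K \<longleftrightarrow>
     (\<exists>P. essential_pattern_group d P \<and> K = GP d P)
     \<and> (\<forall>d' P'. d' < d \<longrightarrow> essential_pattern_group d' P' \<longrightarrow> K \<noteq> GP d' P')"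

definition Hdim :: "(bool list \<Rightarrow> bool list) set \<Rightarrow> ereal" where
  "Hdim K = liminf (\<lambda>n. ereal (log 2 (real (card (restr n ` K)))
                               / log 2 (real (card (aut_fin n)))))"

text \<open>portrait with values in C_2 = bit (additive, 1 = sigma)\<close>
definition alpha :: "(bool list \<Rightarrow> bool list) \<Rightarrow> bit" where
  "alpha g = (if g [False] = [True] then 1 else 0)"

definition portrait :: "(bool list \<Rightarrow> bool list) \<Rightarrow> (bool list \<Rightarrow> bit)" where
  "portrait g = (\<lambda>w. alpha (sec g w))"

definition additive_portraits :: "(bool list \<Rightarrow> bool list) set \<Rightarrow> bool" where
  "additive_portraits H \<longleftrightarrow> (\<lambda>w. 0) \<in> portrait ` H
     \<and> (\<forall>a\<in>portrait ` H. \<forall>b\<in>portrait ` H. (\<lambda>w. a w + b w) \<in> portrait ` H)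
     \<and> (\<forall>a\<in>portrait ` H. (\<lambda>w. - a w) \<in> portrait ` H)"

end

theory Submission
  imports Defs "HOL-Library.FuncSet" "HOL-Library.Function_Algebras" "HOL-Real_Asymp.Real_Asymp"
begin

text \<open>Portraits identify \<open>G_P\<close> with the labellings of the tree all of whose windows of depth
  \<open>d\<close> lie in the set \<open>S\<close> of portraits of \<open>P\<close>. Counting extensions level by level gives
  \<open>Hdim G_P = log2 |K| / 2^(d-1)\<close>, where \<open>K \<subseteq> S\<close> consists of the patterns acting on the
  last level only, so the hypothesis says \<open>|K| = 2^(2^(d-1) - 2)\<close>. Splitting \<open>K\<close> along the
  two subtrees of the root embeds it into \<open>K' \<times> K'\<close>, where \<open>K'\<close> is the analogous group for
  the restriction of \<open>P\<close> to depth \<open>d - 1\<close>. If \<open>K'\<close> were a proper subgroup of the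
  labellings of level \<open>d - 2\<close>, it would have at most half their number, which forces the
  embedding to be onto; then that restriction would already define \<open>G_P\<close>, contradicting the
  minimality of \<open>d\<close>. So every labelling of level \<open>d - 2\<close> is realized, and by essentiality
  \<open>P\<close> realizes every portrait above its last level. Then \<open>K\<close> is a subspace of index 4 of
  the labellings of level \<open>d - 1\<close>, invariant under a group acting transitively on each
  level, which forces it to consist of the labellings with even sum on both halves. Finally the two half-sums of a pattern depend
  linearly on its portrait above the last level, so \<open>S\<close>, and with it the set of portraits of
  \<open>G_P\<close>, is closed under addition.\<close>

(* keep sums and products of bits in ring form instead of rewriting them to XOR/AND *)
declare add_bit_eq_xor [simp del] mult_bit_eq_and [simp del]

lemma bit_zero_or_one: "(x::bit) = 0 \<or> x = 1"
  by (cases x) auto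

lemma bit_add_self [simp]: "(x::bit) + x = 0"
  using bit_zero_or_one[of x] by auto

lemma bit_add_self_left [simp]: "(x::bit) + (x + y) = y"
  by (metis add.assoc add_0 bit_add_self)

section \<open>The automorphism with a given portrait\<close>

text \<open>\<open>f w = 1\<close> means that the two children of the vertex \<open>w\<close> are swapped.\<close>

fun aut_of :: "(bool list \<Rightarrow> bit) \<Rightarrow> bool list \<Rightarrow> bool list" where
  "aut_of f [] = []"
| "aut_of f (x # w) = (x \<noteq> (f [] = 1)) # aut_of (\<lambda>v. f (x # v)) w"

lemma length_aut_of [simp]: "length (aut_of f w) = length w"
  by (induction w arbitrary: f) auto

lemma aut_of_append: "aut_of f (u @ v) = aut_of f u @ aut_of (\<lambda>z. f (u @ z)) v"
  by (induction u arbitrary: f) auto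

lemma aut_of_snoc: "aut_of f (w @ [x]) = aut_of f w @ [x \<noteq> (f w = 1)]"
  by (simp add: aut_of_append)

lemma take_aut_of: "take k (aut_of f w) = aut_of f (take k w)"
  by (induction w arbitrary: f k) (auto simp: take_Cons split: nat.splits)

lemma nth_aut_of: "k < length w \<Longrightarrow> aut_of f w ! k = (w ! k \<noteq> (f (take k w) = 1))"
  by (induction w arbitrary: f k) (auto simp: nth_Cons split: nat.splits)

lemma prefix_aut_of: "prefix u v \<Longrightarrow> prefix (aut_of f u) (aut_of f v)"
  by (auto simp: prefix_def aut_of_append)

lemma aut_of_cong_prefixes:
  "(\<And>k. k < length w \<Longrightarrow> f (take k w) = g (take k w)) \<Longrightarrow> aut_of f w = aut_of g w"
proof (induction w arbitrary: f g)
  case (Cons x w)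
  have "f [] = g []" using Cons.prems[of 0] by simp
  moreover have "aut_of (\<lambda>v. f (x # v)) w = aut_of (\<lambda>v. g (x # v)) w"
    by (rule Cons.IH) (use Cons.prems in \<open>fastforce\<close>)
  ultimately show ?case by simp
qed simp

lemma aut_of_cong: "(\<And>v. length v < length w \<Longrightarrow> f v = g v) \<Longrightarrow> aut_of f w = aut_of g w"
  by (rule aut_of_cong_prefixes) simp

lemma aut_of_zero: "aut_of (\<lambda>_. 0) = id"
proof
  show "aut_of (\<lambda>_. 0) w = id w" for w by (induction w) auto
qed

lemma aut_of_vanishing_prefixes:
  "(\<And>k. k < length w \<Longrightarrow> f (take k w) = 0) \<Longrightarrow> aut_of f w = w"
  using aut_of_cong_prefixes[of w f "\<lambda>_. 0"] by (simp add: aut_of_zero)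

lemma inj_aut_of: "inj (aut_of f)"
proof (rule injI)
  show "aut_of f u = aut_of f v \<Longrightarrow> u = v" for u v
  proof (induction u arbitrary: v f)
    case Nil then show ?case by (cases v) auto
  next
    case (Cons x u)
    then obtain a t where v: "v = a # t" by (cases v) auto
    with Cons.prems have "x = a" by (cases x; cases a) auto
    with Cons v show ?case by auto
  qed
qed

lemma surj_aut_of: "surj (aut_of f)"
proof -
  have "\<exists>w. aut_of f w = y" for y
  proof (induction y arbitrary: f)
    case Nil then show ?case by (intro exI[of _ "[]"]) simp
  next
    case (Cons b y)
    define x where "x = (b \<noteq> (f [] = 1))"
    obtain w where "aut_of (\<lambda>v. f (x # v)) w = y" using Cons by blast
    then have "aut_of f (x # w) = b # y" by (auto simp: x_def)
    then show ?case by blast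
  qed
  then show ?thesis by (metis surjI)
qed

lemma bij_aut_of: "bij (aut_of f)"
  by (simp add: bij_def inj_aut_of surj_aut_of)

lemma aut_of_in_aut: "aut_of f \<in> aut"
  using inj_aut_of surj_aut_of prefix_aut_of by (auto simp: aut_def bij_def)

lemma portrait_aut_of [simp]: "portrait (aut_of f) = f"
proof
  show "portrait (aut_of f) w = f w" for w
    using bit_zero_or_one[of "f w"]
    by (auto simp: portrait_def alpha_def sec_def aut_of_snoc)
qed

lemma prefix_length_Suc:
  assumes "prefix a b" "length b = Suc (length a)"
  shows "\<exists>c. b = a @ [c]"
proof -
  obtain r where "b = a @ r" using assms(1) by (auto simp: prefix_def)
  with assms(2) show ?thesis by (cases r) auto
qed

text \<open>Stated so as to cover both the elements of \<open>aut\<close> and those of \<open>aut_fin k\<close>.\<close>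

lemma eq_aut_of_portrait:
  assumes len: "\<And>u. length (g u) = length u"
    and pre: "\<And>u v. length v \<le> k \<Longrightarrow> prefix u v \<Longrightarrow> prefix (g u) (g v)"
    and inj: "inj_on g (words_le k)"
    and "length w \<le> k"
  shows "g w = aut_of (portrait g) w"
  using \<open>length w \<le> k\<close>
proof (induction w rule: rev_induct)
  case Nil
  then show ?case using len[of "[]"] by simp
next
  case (snoc x w)
  have "length (w @ [b]) \<le> k" for b using snoc.prems by simp
  then have "\<exists>c. g (w @ [b]) = g w @ [c]" for b
    using prefix_length_Suc[OF pre[of "w @ [b]" w]] len by simp
  then obtain c0 c1 c where c0: "g (w @ [False]) = g w @ [c0]" and c1: "g (w @ [True]) = g w @ [c1]"
    and c: "g (w @ [x]) = g w @ [c]" by meson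
  have "c1 \<noteq> c0"
    using c0 c1 inj_onD[OF inj, of "w @ [False]" "w @ [True]"] snoc.prems by (auto simp: words_le_def)
  moreover have "portrait g w = (if c0 then 1 else 0)"
    using len[of w] by (simp add: portrait_def alpha_def sec_def c0)
  ultimately have "c = (x \<noteq> (portrait g w = 1))"
    using c c0 c1 by (cases x) auto
  then show ?case using c snoc by (simp add: aut_of_snoc)
qed

lemma aut_eq_aut_of_portrait: "g \<in> aut \<Longrightarrow> g = aut_of (portrait g)"
  by (rule ext, rule eq_aut_of_portrait[where k = "length w" for w])
    (auto simp: aut_def bij_def intro: inj_on_subset)

definition trunc :: "nat \<Rightarrow> (bool list \<Rightarrow> bit) \<Rightarrow> bool list \<Rightarrow> bit" where
  "trunc k f = (\<lambda>v. if length v < k then f v else 0)"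

definition shift :: "(bool list \<Rightarrow> bit) \<Rightarrow> bool list \<Rightarrow> bool list \<Rightarrow> bit" where
  "shift f w = (\<lambda>v. f (w @ v))"

definition pcomp :: "(bool list \<Rightarrow> bit) \<Rightarrow> (bool list \<Rightarrow> bit) \<Rightarrow> bool list \<Rightarrow> bit" where
  "pcomp f g = (\<lambda>x. g x + f (aut_of g x))"

lemma trunc_trunc: "trunc j (trunc k f) = trunc (min j k) f"
  by (auto simp: trunc_def)

lemma trunc_shift_add:
  "trunc k (shift (\<lambda>v. f v + g v) w) = (\<lambda>v. trunc k (shift f w) v + trunc k (shift g w) v)"
  by (auto simp: trunc_def shift_def)

lemma aut_of_trunc: "length w \<le> k \<Longrightarrow> aut_of (trunc k f) w = aut_of f w"
  by (rule aut_of_cong) (simp add: trunc_def)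

lemma sec_aut_of: "sec (aut_of f) w = aut_of (shift f w)"
  by (rule ext) (simp add: sec_def aut_of_append shift_def)

lemma aut_of_pcomp: "aut_of f \<circ> aut_of g = aut_of (pcomp f g)"
proof
  show "(aut_of f \<circ> aut_of g) w = aut_of (pcomp f g) w" for w
  proof (induction w arbitrary: f g)
    case (Cons x w)
    define x' where "x' = (x \<noteq> (g [] = 1))"
    have "(x' \<noteq> (f [] = 1)) = (x \<noteq> (pcomp f g [] = 1))"
      using bit_zero_or_one[of "f []"] bit_zero_or_one[of "g []"] by (auto simp: pcomp_def x'_def)
    moreover have "pcomp (\<lambda>v. f (x' # v)) (\<lambda>v. g (x # v)) = (\<lambda>v. pcomp f g (x # v))"
      by (auto simp: pcomp_def x'_def)
    ultimately show ?case
      using Cons.IH[of "\<lambda>v. f (x' # v)" "\<lambda>v. g (x # v)"] by (simp add: x'_def)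
  qed simp
qed

lemma aut_of_eq_iff: "aut_of f = aut_of g \<longleftrightarrow> f = g"
  by (metis portrait_aut_of)

lemma pcomp_assoc: "pcomp (pcomp f g) h = pcomp f (pcomp g h)"
  by (metis aut_of_eq_iff aut_of_pcomp comp_assoc)

lemma pcomp_apply_fixed: "aut_of g x = x \<Longrightarrow> pcomp f g x = g x + f x"
  by (simp add: pcomp_def)

lemma pcomp_zero_left [simp]: "pcomp (\<lambda>_. 0) f = f"
  by (simp add: pcomp_def)

lemma pcomp_inverse_commute:
  assumes "pcomp s t = (\<lambda>_. 0)" shows "pcomp t s = (\<lambda>_. 0)"
proof -
  have "aut_of s \<circ> aut_of t = id" using assms by (simp add: aut_of_pcomp aut_of_zero)
  then have "aut_of t \<circ> aut_of s = id"
    using bij_aut_of[of s] by (metis bij_is_inj left_right_inverse_eq o_inv_o_cancel)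
  then show ?thesis by (metis aut_of_eq_iff aut_of_pcomp aut_of_zero)
qed

lemma portrait_restr_aut_of: "portrait (restr k (aut_of f)) = trunc k f"
proof
  show "portrait (restr k (aut_of f)) w = trunc k f w" for w
    using bit_zero_or_one[of "f w"]
    by (auto simp: portrait_def alpha_def sec_def restr_def trunc_def aut_of_snoc)
qed

lemma restr_aut_of_trunc: "restr k (aut_of (trunc k f)) = restr k (aut_of f)"
  by (rule ext) (simp add: restr_def aut_of_trunc)

lemma restr_aut_of_eq_iff: "restr k (aut_of f) = restr k (aut_of g) \<longleftrightarrow> trunc k f = trunc k g"
  by (metis portrait_restr_aut_of restr_aut_of_trunc)

lemma restr_restr: "j \<le> k \<Longrightarrow> restr j (restr k g) = restr j g"
  by (auto simp: restr_def)

lemma restr_sec_restr: "Suc k \<le> j \<Longrightarrow> restr k (sec (restr j g) [i]) = restr k (sec g [i])"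
  by (auto simp: restr_def sec_def fun_eq_iff)

lemma restr_aut_of_pcomp: "restr k (aut_of f) \<circ> restr k (aut_of g) = restr k (aut_of (pcomp f g))"
  by (rule ext) (auto simp: restr_def aut_of_pcomp[symmetric])

lemma restr_aut_of_zero: "restr k (aut_of (\<lambda>_. 0)) = id"
  by (simp add: restr_def aut_of_zero fun_eq_iff)

lemma length_restr_aut_of [simp]: "length (restr k (aut_of f) w) = length w"
  by (simp add: restr_def)

lemma inj_restr_aut_of: "inj (restr k (aut_of f))"
proof (rule injI)
  fix u v assume eq: "restr k (aut_of f) u = restr k (aut_of f) v"
  then have "length u = length v" by (metis length_restr_aut_of)
  show "u = v"
  proof (cases "length u \<le> k")
    case True
    then have "aut_of f u = aut_of f v" using eq \<open>length u = length v\<close> by (simp add: restr_def)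
    then show ?thesis using inj_aut_of[of f] by (simp add: inj_eq)
  qed (use eq \<open>length u = length v\<close> in \<open>simp add: restr_def\<close>)
qed

lemma surj_restr_aut_of: "surj (restr k (aut_of f))"
proof -
  have "y \<in> range (restr k (aut_of f))" for y
  proof (cases "length y \<le> k")
    case True
    obtain w where "y = aut_of f w" using surj_aut_of[of f] by (metis surjD)
    with True show ?thesis by (intro range_eqI[of _ _ w]) (simp add: restr_def)
  qed (simp add: restr_def range_eqI[of _ _ y])
  then show ?thesis by blast
qed

lemma bij_restr_aut_of: "bij (restr k (aut_of f))"
  by (simp add: bij_def inj_restr_aut_of surj_restr_aut_of)

lemma restr_aut_of_in_aut_fin: "restr k (aut_of f) \<in> aut_fin k"
proof -
  have "restr k (aut_of f) ` words_le k = words_le k"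
  proof (intro equalityI subsetI)
    fix y assume "y \<in> words_le k"
    moreover obtain w where "y = restr k (aut_of f) w" using surj_restr_aut_of by (metis surjD)
    ultimately show "y \<in> restr k (aut_of f) ` words_le k" by (auto simp: words_le_def)
  qed (auto simp: words_le_def)
  then have "bij_betw (restr k (aut_of f)) (words_le k) (words_le k)"
    by (rule bij_betw_subset[OF bij_restr_aut_of subset_UNIV])
  moreover have "prefix (restr k (aut_of f) u) (restr k (aut_of f) v)"
    if "length v \<le> k" "prefix u v" for u v
    using that prefix_length_le[OF that(2)] prefix_aut_of by (simp add: restr_def)
  ultimately show ?thesis unfolding aut_fin_def by (simp add: restr_def)
qed

lemma aut_fin_eq_restr_aut_of_portrait:
  assumes "p \<in> aut_fin k" shows "p = restr k (aut_of (portrait p))"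
proof
  show "p w = restr k (aut_of (portrait p)) w" for w
  proof (cases "length w \<le> k")
    case True
    then show ?thesis using assms eq_aut_of_portrait[of p k w]
      by (auto simp: aut_fin_def bij_betw_def restr_def)
  qed (use assms in \<open>auto simp: aut_fin_def restr_def\<close>)
qed

lemma trunc_portrait_aut_fin: "p \<in> aut_fin k \<Longrightarrow> trunc k (portrait p) = portrait p"
  by (metis aut_fin_eq_restr_aut_of_portrait portrait_restr_aut_of)

definition supported_on :: "'a set \<Rightarrow> ('a \<Rightarrow> bit) set" where
  "supported_on D = {f. \<forall>x. x \<notin> D \<longrightarrow> f x = 0}"

lemma bij_betw_supported_on_Pow: "bij_betw (\<lambda>f. {x. f x = 1}) (supported_on D) (Pow D)"
proof (rule bij_betw_byWitness[where f' = "\<lambda>A x. if x \<in> A then 1 else 0"])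
  show "\<forall>f\<in>supported_on D. (\<lambda>x. if x \<in> {x. f x = 1} then 1 else 0) = f"
    using bit_zero_or_one by (auto simp: fun_eq_iff)
qed (auto simp: supported_on_def)

lemma finite_supported_on: "finite D \<Longrightarrow> finite (supported_on D)"
  using bij_betw_finite[OF bij_betw_supported_on_Pow[of D]] by simp

lemma card_supported_on: "finite D \<Longrightarrow> card (supported_on D) = 2 ^ card D"
  using bij_betw_same_card[OF bij_betw_supported_on_Pow[of D]] by (simp add: card_Pow)

lemma finite_words_eq: "finite {v :: bool list. length v = j}"
  using finite_lists_length_eq[of "UNIV :: bool set" j] by simp

lemma card_words_eq: "card {v :: bool list. length v = j} = 2 ^ j"
  using card_lists_length_eq[of "UNIV :: bool set" j] by simp

lemma finite_words_less: "finite {v :: bool list. length v < j}"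
  by (rule finite_subset[OF _ finite_lists_length_le[of "UNIV :: bool set" j]]) auto

lemma card_words_less: "card {v :: bool list. length v < j} = 2 ^ j - 1"
proof (induction j)
  case (Suc j)
  have "{v :: bool list. length v < Suc j} = {v. length v < j} \<union> {v. length v = j}" by auto
  then have "card {v :: bool list. length v < Suc j} = 2 ^ j - 1 + 2 ^ j"
    using Suc finite_words_less finite_words_eq card_words_eq
    by (simp add: card_Un_disjoint disjoint_iff)
  then show ?case using one_le_power[of "2::nat" j] by simp
qed simp

lemma trunc_eq_iff_supported: "trunc k f = f \<longleftrightarrow> f \<in> supported_on {v. length v < k}"
  by (auto simp: trunc_def supported_on_def fun_eq_iff)

lemma card_aut_fin: "card (aut_fin n) = 2 ^ (2 ^ n - 1)"
proof -
  let ?D = "supported_on {v :: bool list. length v < n}"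
  have "aut_fin n = (\<lambda>f. restr n (aut_of f)) ` ?D"
  proof (intro equalityI subsetI)
    fix p assume "p \<in> aut_fin n"
    then show "p \<in> (\<lambda>f. restr n (aut_of f)) ` ?D"
      using aut_fin_eq_restr_aut_of_portrait trunc_portrait_aut_fin trunc_eq_iff_supported
      by blast
  qed (use restr_aut_of_in_aut_fin in auto)
  moreover have "inj_on (\<lambda>f. restr n (aut_of f)) ?D"
    by (rule inj_onI) (metis restr_aut_of_eq_iff trunc_eq_iff_supported)
  ultimately have "card (aut_fin n) = card ?D" by (simp add: card_image)
  then show ?thesis using card_supported_on[OF finite_words_less] card_words_less by simp
qed

definition admissible :: "nat \<Rightarrow> (bool list \<Rightarrow> bit) set \<Rightarrow> (bool list \<Rightarrow> bit) set" where
  "admissible d S = {f. \<forall>w. trunc d (shift f w) \<in> S}"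

locale pattern_group =
  fixes d :: nat and P :: "(bool list \<Rightarrow> bool list) set"
  assumes essential: "essential_pattern_group d P"
begin

definition S :: "(bool list \<Rightarrow> bit) set" where "S = portrait ` P"

lemma d_pos: "1 \<le> d"
  using essential by (simp add: essential_pattern_group_def)

lemma P_subgroup: "subgroup_of_fin d P"
  using essential by (simp add: essential_pattern_group_def)

lemma P_subset_aut_fin: "P \<subseteq> aut_fin d"
  using P_subgroup by (simp add: subgroup_of_fin_def)

lemma P_elem_eq_restr_aut_of:
  assumes "p \<in> P" obtains s where "s \<in> S" "p = restr d (aut_of s)"
proof
  show "portrait p \<in> S" using assms by (simp add: S_def)
  show "p = restr d (aut_of (portrait p))"
    using assms P_subset_aut_fin aut_fin_eq_restr_aut_of_portrait by blast
qed

lemma trunc_S: "s \<in> S \<Longrightarrow> trunc d s = s"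
  using P_subset_aut_fin trunc_portrait_aut_fin by (auto simp: S_def)

lemma S_vanishes:
  assumes "s \<in> S" "d \<le> length v" shows "s v = 0"
proof -
  have "s v = trunc d s v" using trunc_S[OF assms(1)] by simp
  then show ?thesis using assms(2) by (simp add: trunc_def)
qed

lemma S_supported: "S \<subseteq> supported_on {v. length v < d}"
  using trunc_S trunc_eq_iff_supported by blast

lemma finite_S: "finite S"
  using S_supported finite_supported_on[OF finite_words_less] by (rule finite_subset)

lemma restr_aut_of_in_P_iff: "restr d (aut_of f) \<in> P \<longleftrightarrow> trunc d f \<in> S"
proof
  assume "restr d (aut_of f) \<in> P"
  then show "trunc d f \<in> S" by (metis S_def image_eqI portrait_restr_aut_of)
next
  assume "trunc d f \<in> S"
  then obtain p where "p \<in> P" "portrait p = trunc d f" by (auto simp: S_def)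
  then show "restr d (aut_of f) \<in> P"
    by (metis P_subset_aut_fin aut_fin_eq_restr_aut_of_portrait restr_aut_of_trunc subsetD)
qed

lemma zero_in_S: "(\<lambda>_. 0) \<in> S"
  using P_subgroup restr_aut_of_in_P_iff[of "\<lambda>_. 0"]
  by (simp add: restr_aut_of_zero subgroup_of_fin_def trunc_def)

lemma restr_aut_of_S_in_P: "s \<in> S \<Longrightarrow> restr d (aut_of s) \<in> P"
  by (simp add: restr_aut_of_in_P_iff trunc_S)

lemma trunc_pcomp_S: "s \<in> S \<Longrightarrow> t \<in> S \<Longrightarrow> trunc d (pcomp s t) = pcomp s t"
  using S_vanishes[of s] S_vanishes[of t] by (auto simp: trunc_def pcomp_def fun_eq_iff)

lemma pcomp_in_S:
  assumes "s \<in> S" "t \<in> S" shows "pcomp s t \<in> S"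
proof -
  have "restr d (aut_of s) \<circ> restr d (aut_of t) \<in> P"
    using assms P_subgroup restr_aut_of_S_in_P by (simp add: subgroup_of_fin_def)
  then show ?thesis
    using assms by (simp add: restr_aut_of_pcomp restr_aut_of_in_P_iff trunc_pcomp_S)
qed

lemma S_inverse:
  assumes s: "s \<in> S" shows "\<exists>t\<in>S. pcomp s t = (\<lambda>_. 0)"
proof -
  let ?p = "restr d (aut_of s)"
  have "inv ?p \<in> P" using P_subgroup restr_aut_of_S_in_P[OF s] by (simp add: subgroup_of_fin_def)
  then obtain t where t: "t \<in> S" "inv ?p = restr d (aut_of t)" by (rule P_elem_eq_restr_aut_of)
  have "?p \<circ> inv ?p = id" using bij_is_surj[OF bij_restr_aut_of[of d s]] by (simp add: surj_iff)
  then have "restr d (aut_of (pcomp s t)) = restr d (aut_of (\<lambda>_. 0))"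
    by (simp add: t(2) restr_aut_of_pcomp restr_aut_of_zero)
  then have "trunc d (pcomp s t) = trunc d (\<lambda>_. 0)" by (simp add: restr_aut_of_eq_iff)
  then show ?thesis using t(1) trunc_pcomp_S[OF s t(1)] by (auto simp: trunc_def)
qed

text \<open>Two patterns with the same portrait below level \<open>d - 1\<close> differ by an element acting
  only on the last level, where composition is addition of portraits.\<close>

lemma S_add_of_eq_below:
  assumes s: "s \<in> S" and s': "s' \<in> S" and below: "\<And>v. length v < d - 1 \<Longrightarrow> s v = s' v"
  shows "(\<lambda>v. s v + s' v) \<in> S"
proof -
  obtain t where t: "t \<in> S" "pcomp s t = (\<lambda>_. 0)" using S_inverse[OF s] by blast
  define q where "q = pcomp t s'"
  have q: "q \<in> S" using pcomp_in_S t s' by (simp add: q_def)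
  have sq: "pcomp s q = s'" by (simp add: q_def pcomp_assoc[symmetric] t)
  have "q x = s x + s' x" for x
  proof (cases "length x < d")
    case True
    have "aut_of s' x = aut_of s x"
      by (rule aut_of_cong) (use True below in auto)
    moreover have "aut_of s' x = aut_of s (aut_of q x)" by (metis sq aut_of_pcomp comp_apply)
    ultimately have "aut_of q x = x" using inj_aut_of by (metis injD)
    then have "s' x = q x + s x" using pcomp_apply_fixed[of q x s] sq by simp
    then show ?thesis by (simp add: add.left_commute)
  qed (use S_vanishes[OF q] S_vanishes[OF s] S_vanishes[OF s'] in \<open>simp add: not_less\<close>)
  then have "q = (\<lambda>v. s v + s' v)" by (rule ext)
  then show ?thesis using q by simp
qed

lemma S_essential:
  assumes s: "s \<in> S" shows "\<exists>t\<in>S. \<forall>v. length v < d - 1 \<longrightarrow> t v = s (i # v)"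
proof -
  obtain q where q: "q \<in> P" "restr (d - 1) q = restr (d - 1) (sec (restr d (aut_of s)) [i])"
    using essential restr_aut_of_S_in_P[OF s] by (auto simp: essential_pattern_group_def)
  obtain t where t: "t \<in> S" "q = restr d (aut_of t)" using q(1) by (rule P_elem_eq_restr_aut_of)
  have "restr (d - 1) (sec (restr d (aut_of s)) [i]) = restr (d - 1) (aut_of (shift s [i]))"
    using d_pos by (simp add: restr_sec_restr sec_aut_of)
  then have "trunc (d - 1) t = trunc (d - 1) (shift s [i])"
    using q(2) t(2) by (simp add: restr_restr restr_aut_of_eq_iff)
  then have "\<forall>v. length v < d - 1 \<longrightarrow> t v = s (i # v)"
    by (auto simp: trunc_def shift_def fun_eq_iff) metis
  then show ?thesis using t(1) by blast
qed

lemma GP_eq_image_admissible: "GP d P = aut_of ` admissible d S"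
proof (intro equalityI subsetI)
  fix g assume g: "g \<in> GP d P"
  then have "g = aut_of (portrait g)" by (simp add: GP_def aut_eq_aut_of_portrait)
  moreover have "restr d (sec g w) \<in> P" for w using g by (simp add: GP_def)
  then have "trunc d (shift (portrait g) w) \<in> S" for w
    by (metis calculation restr_aut_of_in_P_iff sec_aut_of)
  ultimately show "g \<in> aut_of ` admissible d S" by (intro image_eqI) (auto simp: admissible_def)
next
  fix g assume "g \<in> aut_of ` admissible d S"
  then obtain f where "f \<in> admissible d S" "g = aut_of f" by blast
  then show "g \<in> GP d P"
    by (simp add: GP_def admissible_def sec_aut_of restr_aut_of_in_P_iff aut_of_in_aut)
qed

lemma portrait_image_GP: "portrait ` GP d P = admissible d S"
  by (simp add: GP_eq_image_admissible image_image)

lemma additive_portraits_GP_if_S_additive: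
  assumes "\<And>s t. s \<in> S \<Longrightarrow> t \<in> S \<Longrightarrow> (\<lambda>v. s v + t v) \<in> S"
  shows "additive_portraits (GP d P)"
proof -
  have "(\<lambda>w. f w + g w) \<in> admissible d S" if "f \<in> admissible d S" "g \<in> admissible d S" for f g
    using that assms by (simp add: admissible_def trunc_shift_add)
  moreover have "(\<lambda>w. 0) \<in> admissible d S"
    using zero_in_S by (simp add: admissible_def trunc_def shift_def)
  ultimately show ?thesis by (simp add: additive_portraits_def portrait_image_GP)
qed

section \<open>Patterns acting on the last level only\<close>

definition S_last :: "(bool list \<Rightarrow> bit) set" where
  "S_last = {s \<in> S. \<forall>v. length v < d - 1 \<longrightarrow> s v = 0}"

lemma S_last_vanishes: "l \<in> S_last \<Longrightarrow> length v \<noteq> d - 1 \<Longrightarrow> l v = 0"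
  using S_vanishes[of l v] by (cases "length v < d - 1") (auto simp: S_last_def)

lemma zero_in_S_last: "(\<lambda>_. 0) \<in> S_last"
  using zero_in_S by (simp add: S_last_def)

lemma finite_S_last: "finite S_last"
  using finite_S by (simp add: S_last_def)

lemma card_S_last_pos: "0 < card S_last"
  using finite_S_last zero_in_S_last card_gt_0_iff by blast

lemma S_add_S_last:
  assumes s: "s \<in> S" and l: "l \<in> S_last" shows "(\<lambda>v. s v + l v) \<in> S"
proof -
  have lS: "l \<in> S" using l by (simp add: S_last_def)
  have "pcomp s l x = s x + l x" for x
  proof (cases "length x < d")
    case True
    then have "aut_of l x = x" using l by (intro aut_of_vanishing_prefixes) (auto simp: S_last_def)
    then show ?thesis by (simp add: pcomp_apply_fixed add.commute)
  next
    case False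
    then show ?thesis
      using S_vanishes[OF s, of x] S_vanishes[OF s, of "aut_of l x"] S_vanishes[OF lS, of x]
      by (simp add: pcomp_def)
  qed
  then have "pcomp s l = (\<lambda>v. s v + l v)" by (rule ext)
  then show ?thesis using pcomp_in_S[OF s lS] by simp
qed

lemma S_add_in_S_last:
  assumes "s \<in> S" "s' \<in> S" "\<And>v. length v < d - 1 \<Longrightarrow> s v = s' v"
  shows "(\<lambda>v. s v + s' v) \<in> S_last"
  using S_add_of_eq_below[OF assms] assms(3) by (simp add: S_last_def)

lemma S_last_add: "l \<in> S_last \<Longrightarrow> l' \<in> S_last \<Longrightarrow> (\<lambda>v. l v + l' v) \<in> S_last"
  by (rule S_add_in_S_last) (auto simp: S_last_def)

definition child_pattern :: "(bool list \<Rightarrow> bit) \<Rightarrow> bool \<Rightarrow> bool list \<Rightarrow> bit" where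
  "child_pattern s i = (SOME t. t \<in> S \<and> (\<forall>v. length v < d - 1 \<longrightarrow> t v = s (i # v)))"

lemma child_pattern:
  assumes "s \<in> S"
  shows "child_pattern s i \<in> S" and "length v < d - 1 \<Longrightarrow> child_pattern s i v = s (i # v)"
  using someI_ex[OF S_essential[OF assms, of i, unfolded Bex_def]]
  by (simp_all add: child_pattern_def)

fun descend :: "(bool list \<Rightarrow> bit) \<Rightarrow> bool list \<Rightarrow> bool list \<Rightarrow> bit" where
  "descend s [] = s"
| "descend s (i # r) = descend (child_pattern s i) r"

lemma descend_in_S: "s \<in> S \<Longrightarrow> descend s r \<in> S"
  by (induction r arbitrary: s) (auto simp: child_pattern)

lemma descend_apply: "s \<in> S \<Longrightarrow> length r + length v < d \<Longrightarrow> descend s r v = s (r @ v)"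
  by (induction r arbitrary: s) (auto simp: child_pattern)

lemma descend_append: "descend s (r @ r') = descend (descend s r) r'"
  by (induction r arbitrary: s) auto

definition admissible_upto :: "nat \<Rightarrow> (bool list \<Rightarrow> bit) set" where
  "admissible_upto n = {h \<in> supported_on {v. length v < n}.
     \<forall>w. length w + d \<le> n \<longrightarrow> trunc d (shift h w) \<in> S}"

lemma finite_admissible_upto: "finite (admissible_upto n)"
  by (rule finite_subset[OF _ finite_supported_on[OF finite_words_less]])
    (auto simp: admissible_upto_def)

lemma admissible_upto_d: "admissible_upto d = S"
proof (intro equalityI subsetI)
  fix h assume h: "h \<in> admissible_upto d"
  then have "trunc d (shift h []) = h"
    by (auto simp: admissible_upto_def shift_def trunc_eq_iff_supported)
  with h show "h \<in> S" by (auto simp: admissible_upto_def)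
qed (use S_supported trunc_S in \<open>auto simp: admissible_upto_def shift_def\<close>)

lemma trunc_admissible_upto_self: "h \<in> admissible_upto n \<Longrightarrow> trunc n h = h"
  by (simp add: admissible_upto_def trunc_eq_iff_supported)

lemma trunc_admissible_upto:
  assumes "h \<in> admissible_upto (Suc n)" shows "trunc n h \<in> admissible_upto n"
proof -
  have "trunc d (shift (trunc n h) w) = trunc d (shift h w)" if "length w + d \<le> n" for w
    using that by (auto simp: trunc_def shift_def)
  then show ?thesis using assms by (auto simp: admissible_upto_def supported_on_def trunc_def)
qed

text \<open>Above depth \<open>n - d\<close> the extension follows the essential successors chosen by
  \<open>descend\<close>, starting from the window of \<open>h\<close> at depth \<open>n - d\<close>.\<close>

lemma admissible_extension:
  assumes n: "d \<le> n" and h: "h \<in> admissible_upto n"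
  shows "\<exists>f\<in>admissible d S. trunc n f = h"
proof -
  define k where "k = n - d"
  define win where "win u = trunc d (shift h u)" for u
  have h_supp: "n \<le> length x \<Longrightarrow> h x = 0" for x
    using h by (auto simp: admissible_upto_def supported_on_def)
  have win_S: "length u \<le> k \<Longrightarrow> win u \<in> S" for u
    using h n by (auto simp: admissible_upto_def win_def k_def)
  define f where "f x = (if length x < k then h x else descend (win (take k x)) (drop k x) [])" for x
  have f_h: "f x = h x" if "length x < n" for x
  proof (cases "length x < k")
    case False
    then have "f x = win (take k x) (drop k x)"
      using that n d_pos win_S descend_apply[of "win (take k x)" "drop k x" "[]"]
      by (simp add: f_def k_def)
    also have "\<dots> = h x" using that n d_pos by (auto simp: win_def trunc_def shift_def k_def)
    finally show ?thesis .
  qed (simp add: f_def)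
  have "trunc d (shift f w) \<in> S" for w
  proof (cases "length w \<le> k")
    case True
    then have "trunc d (shift f w) = win w"
      using f_h n by (auto simp: trunc_def shift_def win_def k_def fun_eq_iff)
    then show ?thesis using win_S[OF True] by simp
  next
    case False
    define s where "s = descend (win (take k w)) (drop k w)"
    have s: "s \<in> S" using descend_in_S win_S[of "take k w"] by (simp add: s_def)
    have "f (w @ v) = s v" if "length v < d" for v
      using False that descend_apply[OF s, of v "[]"]
      by (simp add: f_def s_def descend_append)
    then have "trunc d (shift f w) = trunc d s" by (auto simp: trunc_def shift_def)
    then show ?thesis using s trunc_S by simp
  qed
  moreover have "trunc n f = h" using f_h h_supp by (auto simp: trunc_def)
  ultimately show ?thesis by (auto simp: admissible_def)
qed

lemma trunc_image_admissible:
  assumes "d \<le> n" shows "trunc n ` admissible d S = admissible_upto n"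
proof (intro equalityI subsetI)
  fix h assume "h \<in> trunc n ` admissible d S"
  then obtain f where f: "f \<in> admissible d S" "h = trunc n f" by blast
  then have "trunc d (shift h w) = trunc d (shift f w)" if "length w + d \<le> n" for w
    using that by (auto simp: trunc_def shift_def)
  with f show "h \<in> admissible_upto n"
    by (auto simp: admissible_upto_def admissible_def supported_on_def trunc_def)
qed (use admissible_extension[OF assms] in blast)

section \<open>Counting admissible portraits and the Hausdorff dimension\<close>

definition increments :: "nat \<Rightarrow> (bool list \<Rightarrow> bit) set" where
  "increments n = {k \<in> supported_on {v. length v = n}.
     \<forall>w. length w = Suc n - d \<longrightarrow> trunc d (shift k w) \<in> S_last}"

lemma card_increments:
  assumes n: "d \<le> n" shows "card (increments n) = card S_last ^ 2 ^ (Suc n - d)"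
proof -
  define p where "p = Suc n - d"
  define W where "W = {w :: bool list. length w = p}"
  define windows where "windows k = restrict (\<lambda>w. trunc d (shift k w)) W" for k
  define glue where "glue F x = (if length x = n then F (take p x) (drop p x) else 0)"
    for F :: "bool list \<Rightarrow> bool list \<Rightarrow> bit" and x
  have pn: "p + (d - 1) = n" using n d_pos by (simp add: p_def)
  have windows_glue: "trunc d (shift (glue F) w) = F w" if "F \<in> W \<rightarrow>\<^sub>E S_last" "w \<in> W" for F w
  proof
    show "trunc d (shift (glue F) w) v = F w v" for v
      using that pn d_pos S_last_vanishes[of "F w" v]
      by (cases "length v = d - 1") (auto simp: trunc_def shift_def glue_def W_def)
  qed
  have "bij_betw windows (increments n) (W \<rightarrow>\<^sub>E S_last)"
  proof (rule bij_betw_byWitness[where f' = glue])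
    show "\<forall>k\<in>increments n. glue (windows k) = k"
    proof
      fix k assume "k \<in> increments n"
      then have "k x = 0" if "length x \<noteq> n" for x
        using that by (auto simp: increments_def supported_on_def)
      then show "glue (windows k) = k"
        using pn d_pos by (auto simp: glue_def windows_def W_def trunc_def shift_def fun_eq_iff)
    qed
    show "\<forall>F\<in>W \<rightarrow>\<^sub>E S_last. windows (glue F) = F"
      using windows_glue by (auto simp: windows_def PiE_def extensional_def fun_eq_iff)
    show "windows ` increments n \<subseteq> W \<rightarrow>\<^sub>E S_last"
      by (auto simp: windows_def increments_def W_def p_def)
    show "glue ` (W \<rightarrow>\<^sub>E S_last) \<subseteq> increments n"
      using windows_glue
      by (auto simp: increments_def supported_on_def glue_def W_def p_def simp del: PiE_iff)
  qed
  then have "card (increments n) = card (W \<rightarrow>\<^sub>E S_last)" by (rule bij_betw_same_card)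
  also have "\<dots> = card S_last ^ 2 ^ p"
    using finite_words_eq card_words_eq by (simp add: card_PiE W_def)
  finally show ?thesis by (simp add: p_def)
qed

lemma add_in_increments:
  assumes n: "d \<le> n" and e: "e \<in> admissible_upto (Suc n)" and h: "h \<in> admissible_upto (Suc n)"
    and he: "trunc n h = trunc n e"
  shows "(\<lambda>v. h v + e v) \<in> increments n"
proof -
  have agree: "length v < n \<Longrightarrow> h v = e v" for v
    using fun_cong[OF he, of v] by (simp add: trunc_def)
  have "(\<lambda>v. h v + e v) \<in> supported_on {v. length v = n}"
    using h e agree by (auto simp: supported_on_def admissible_upto_def linorder_neq_iff Suc_le_eq)
  moreover have "trunc d (shift (\<lambda>v. h v + e v) w) \<in> S_last" if "length w = Suc n - d" for w
    unfolding trunc_shift_add using h e that n d_pos agree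
    by (intro S_add_in_S_last) (auto simp: admissible_upto_def trunc_def shift_def)
  ultimately show ?thesis by (simp add: increments_def)
qed

lemma add_increment_in_admissible_upto:
  assumes e: "e \<in> admissible_upto (Suc n)" and k: "k \<in> increments n"
  shows "(\<lambda>v. e v + k v) \<in> admissible_upto (Suc n)"
proof -
  have k_supp: "length v \<noteq> n \<Longrightarrow> k v = 0" for v
    using k by (auto simp: increments_def supported_on_def)
  have "trunc d (shift (\<lambda>v. e v + k v) w) \<in> S" if "length w + d \<le> Suc n" for w
  proof (cases "length w + d \<le> n")
    case True
    then have "trunc d (shift (\<lambda>v. e v + k v) w) = trunc d (shift e w)"
      using k_supp by (auto simp: trunc_def shift_def fun_eq_iff)
    then show ?thesis using e that by (simp add: admissible_upto_def)
  next
    case False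
    then have "trunc d (shift k w) \<in> S_last" using k that by (simp add: increments_def)
    then show ?thesis unfolding trunc_shift_add
      using e that by (intro S_add_S_last) (simp_all add: admissible_upto_def)
  qed
  then show ?thesis using e k_supp by (auto simp: admissible_upto_def supported_on_def)
qed

lemma fiber_admissible_upto:
  assumes n: "d \<le> n" and e: "e \<in> admissible_upto (Suc n)"
  shows "{h \<in> admissible_upto (Suc n). trunc n h = trunc n e} = (\<lambda>k v. e v + k v) ` increments n"
proof (intro equalityI subsetI)
  fix h assume "h \<in> {h \<in> admissible_upto (Suc n). trunc n h = trunc n e}"
  then have "(\<lambda>v. h v + e v) \<in> increments n" using add_in_increments[OF n e] by blast
  then show "h \<in> (\<lambda>k v. e v + k v) ` increments n"
    by (intro image_eqI[of _ _ "\<lambda>v. h v + e v"]) (simp_all add: fun_eq_iff add.left_commute)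
next
  fix h assume "h \<in> (\<lambda>k v. e v + k v) ` increments n"
  then obtain k where k: "k \<in> increments n" and h: "h = (\<lambda>v. e v + k v)" by blast
  moreover have "trunc n h = trunc n e"
    using k by (auto simp: h trunc_def increments_def supported_on_def)
  ultimately show "h \<in> {h \<in> admissible_upto (Suc n). trunc n h = trunc n e}"
    using add_increment_in_admissible_upto[OF e] by blast
qed

lemma card_fiber_admissible_upto:
  assumes n: "d \<le> n" and h: "h \<in> admissible_upto n"
  shows "card {h' \<in> admissible_upto (Suc n). trunc n h' = h} = card S_last ^ 2 ^ (Suc n - d)"
proof -
  obtain f where f: "f \<in> admissible d S" "h = trunc n f"
    using h trunc_image_admissible[OF n] by blast
  define e where "e = trunc (Suc n) f"
  have e: "e \<in> admissible_upto (Suc n)" "trunc n e = h"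
    using f trunc_image_admissible[of "Suc n"] n by (auto simp: e_def trunc_trunc)
  have "card {h' \<in> admissible_upto (Suc n). trunc n h' = h} = card ((\<lambda>k v. e v + k v) ` increments n)"
    using fiber_admissible_upto[OF n e(1)] e(2) by simp
  also have "\<dots> = card (increments n)"
    by (rule card_image) (auto simp: inj_on_def fun_eq_iff)
  finally show ?thesis using card_increments[OF n] by simp
qed

lemma card_admissible_upto_Suc:
  assumes n: "d \<le> n"
  shows "card (admissible_upto (Suc n)) = card (admissible_upto n) * card S_last ^ 2 ^ (Suc n - d)"
proof -
  let ?fiber = "\<lambda>h. {h' \<in> admissible_upto (Suc n). trunc n h' = h}"
  have "admissible_upto (Suc n) = (\<Union>h\<in>admissible_upto n. ?fiber h)"
  proof (intro equalityI subsetI)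
    fix h' assume "h' \<in> admissible_upto (Suc n)"
    then show "h' \<in> (\<Union>h\<in>admissible_upto n. ?fiber h)"
      using trunc_admissible_upto[of h' n] by blast
  qed blast
  then have "card (admissible_upto (Suc n)) = card (\<Union>h\<in>admissible_upto n. ?fiber h)"
    by (rule arg_cong)
  also have "\<dots> = (\<Sum>h\<in>admissible_upto n. card (?fiber h))"
    by (rule card_UN_disjoint) (use finite_admissible_upto in auto)
  also have "\<dots> = (\<Sum>h\<in>admissible_upto n. card S_last ^ 2 ^ (Suc n - d))"
    using card_fiber_admissible_upto[OF n] by simp
  finally show ?thesis by simp
qed

lemma card_admissible_upto:
  assumes "d \<le> n" shows "card (admissible_upto n) = card S * card S_last ^ (2 ^ (Suc n - d) - 2)"
  using assms
proof (induction n rule: dec_induct)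
  case base
  then show ?case by (simp add: admissible_upto_d)
next
  case (step m)
  have "(2::nat) \<le> 2 ^ (Suc m - d)" using step.hyps power_increasing[of 1 "Suc m - d" "2::nat"] by simp
  moreover have "Suc (Suc m) - d = Suc (Suc m - d)" using step.hyps by simp
  ultimately have "2 ^ (Suc m - d) - 2 + 2 ^ (Suc m - d) = 2 ^ (Suc (Suc m) - d) - (2::nat)" by simp
  then show ?case using card_admissible_upto_Suc[OF step.hyps(1)] step.IH
    by (simp add: power_add[symmetric])
qed

lemma card_restr_GP:
  assumes n: "d \<le> n" shows "card (restr n ` GP d P) = card (admissible_upto n)"
proof -
  have "restr n ` GP d P = (\<lambda>h. restr n (aut_of h)) ` (trunc n ` admissible d S)"
    by (simp add: GP_eq_image_admissible image_image restr_aut_of_trunc)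
  then have "restr n ` GP d P = (\<lambda>h. restr n (aut_of h)) ` admissible_upto n"
    by (simp add: trunc_image_admissible[OF n])
  moreover have "inj_on (\<lambda>h. restr n (aut_of h)) (admissible_upto n)"
    by (rule inj_onI) (metis restr_aut_of_eq_iff trunc_admissible_upto_self)
  ultimately show ?thesis by (simp add: card_image)
qed

lemma log_card_restr_GP:
  assumes n: "d \<le> n"
  shows "log 2 (card (restr n ` GP d P))
    = log 2 (card S) - 2 * log 2 (card S_last) + log 2 (card S_last) / 2 ^ (d - 1) * 2 ^ n"
proof -
  have "(2::nat) \<le> 2 ^ (Suc n - d)" using n power_increasing[of 1 "Suc n - d" "2::nat"] by simp
  moreover have "(2::real) ^ n = 2 ^ (Suc n - d) * 2 ^ (d - 1)"
    using n d_pos by (simp flip: power_add)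
  ultimately have e: "real (2 ^ (Suc n - d) - 2 :: nat) = 2 ^ n / 2 ^ (d - 1) - 2"
    by (simp add: of_nat_diff)
  have "0 < card S" using finite_S zero_in_S card_gt_0_iff by blast
  then have "log 2 (card (restr n ` GP d P))
      = log 2 (card S) + real (2 ^ (Suc n - d) - 2 :: nat) * log 2 (card S_last)"
    using card_restr_GP[OF n] card_admissible_upto[OF n] card_S_last_pos
    by (simp add: log_mult log_nat_power)
  then show ?thesis unfolding e by (simp add: field_simps)
qed

lemma Hdim_GP: "Hdim (GP d P) = ereal (log 2 (card S_last) / 2 ^ (d - 1))"
proof -
  define a where "a = log 2 (card S) - 2 * log 2 (card S_last)"
  define b where "b = log 2 (card S_last) / 2 ^ (d - 1)"
  have log_aut_fin: "log 2 (card (aut_fin n)) = 2 ^ n - 1" for n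
    by (simp add: card_aut_fin log_nat_power of_nat_diff)
  have "(\<lambda>n::nat. (a + b * 2 ^ n) / (2 ^ n - 1)) \<longlonglongrightarrow> b" by real_asymp
  moreover have "\<forall>\<^sub>F n in sequentially. (a + b * 2 ^ n) / (2 ^ n - 1)
      = log 2 (card (restr n ` GP d P)) / log 2 (card (aut_fin n))"
    using eventually_ge_at_top[of d]
    by eventually_elim (simp add: log_card_restr_GP log_aut_fin a_def b_def)
  ultimately have "(\<lambda>n. log 2 (card (restr n ` GP d P)) / log 2 (card (aut_fin n))) \<longlonglongrightarrow> b"
    by (rule Lim_transform_eventually)
  then show ?thesis
    unfolding Hdim_def b_def by (intro lim_imp_Liminf tendsto_ereal) simp_all
qed

lemma card_S_last_if_Hdim:
  assumes "2 \<le> d" and "Hdim (GP d P) = ereal (1 - 2 / 2 ^ (d - 1))"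
  shows "card S_last = 2 ^ (2 ^ (d - 1) - 2)"
proof -
  have "log 2 (card S_last) = 2 ^ (d - 1) - 2"
    using assms(2) by (simp add: Hdim_GP field_simps)
  moreover have "(2::nat) \<le> 2 ^ (d - 1)" using assms(1) power_increasing[of 1 "d - 1" "2::nat"] by simp
  ultimately have "log 2 (card S_last) = real (2 ^ (d - 1) - 2 :: nat)" by (simp add: of_nat_diff)
  then have "real (card S_last) = 2 powr real (2 ^ (d - 1) - 2 :: nat)"
    using powr_log_cancel[of 2 "real (card S_last)"] card_S_last_pos by simp
  also have "\<dots> = real (2 ^ (2 ^ (d - 1) - 2) :: nat)" by (simp add: powr_realpow)
  finally show ?thesis by (simp only: of_nat_eq_iff)
qed

end

section \<open>Minimality forces the next-to-last level to be full\<close>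

context pattern_group
begin

definition P_restr :: "(bool list \<Rightarrow> bool list) set" where
  "P_restr = restr (d - 1) ` P"

lemma P_restr_eq_image_S: "P_restr = (\<lambda>s. restr (d - 1) (aut_of s)) ` S"
proof -
  have "P_restr = (\<lambda>s. restr (d - 1) (restr d (aut_of s))) ` S"
    unfolding P_restr_def by (auto intro: restr_aut_of_S_in_P elim!: P_elem_eq_restr_aut_of)
  then show ?thesis by (simp add: restr_restr)
qed

lemma essential_pattern_group_P_restr:
  assumes "2 \<le> d" shows "essential_pattern_group (d - 1) P_restr"
proof -
  have "P_restr \<subseteq> aut_fin (d - 1)"
    unfolding P_restr_eq_image_S using restr_aut_of_in_aut_fin by blast
  moreover have "id \<in> P_restr"
    unfolding P_restr_eq_image_S using zero_in_S restr_aut_of_zero by (metis image_eqI)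
  moreover have "p \<circ> q \<in> P_restr" if "p \<in> P_restr" "q \<in> P_restr" for p q
    using that pcomp_in_S unfolding P_restr_eq_image_S by (auto simp: restr_aut_of_pcomp)
  moreover have "inv p \<in> P_restr" if p: "p \<in> P_restr" for p
  proof -
    obtain s where s: "s \<in> S" "p = restr (d - 1) (aut_of s)"
      using p unfolding P_restr_eq_image_S by blast
    obtain t where t: "t \<in> S" "pcomp s t = (\<lambda>_. 0)" using S_inverse[OF s(1)] by blast
    have "p \<circ> restr (d - 1) (aut_of t) = id" "restr (d - 1) (aut_of t) \<circ> p = id"
      using s(2) t(2) pcomp_inverse_commute[OF t(2)] by (simp_all add: restr_aut_of_pcomp restr_aut_of_zero)
    then have "inv p = restr (d - 1) (aut_of t)" by (rule inv_unique_comp)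
    then show ?thesis using t(1) unfolding P_restr_eq_image_S by blast
  qed
  moreover have "\<exists>q\<in>P_restr. restr (d - 1 - 1) q = restr (d - 1 - 1) (sec p [i])"
    if p: "p \<in> P_restr" for p i
  proof -
    obtain s where s: "s \<in> S" "p = restr (d - 1) (aut_of s)"
      using p unfolding P_restr_eq_image_S by blast
    obtain t where t: "t \<in> S" "\<forall>v. length v < d - 1 \<longrightarrow> t v = s (i # v)"
      using S_essential[OF s(1)] by blast
    have "trunc (d - 1 - 1) t = trunc (d - 1 - 1) (shift s [i])"
      using t(2) by (auto simp: trunc_def shift_def)
    then have "restr (d - 1 - 1) (restr (d - 1) (aut_of t)) = restr (d - 1 - 1) (sec p [i])"
      using assms by (simp add: s(2) restr_restr restr_sec_restr sec_aut_of restr_aut_of_eq_iff)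
    then show ?thesis using t(1) unfolding P_restr_eq_image_S by blast
  qed
  ultimately show ?thesis using assms by (simp add: essential_pattern_group_def subgroup_of_fin_def)
qed

lemma trunc_shift_S_in_restriction:
  assumes "s \<in> S" shows "trunc (d - 1) (shift s [i]) \<in> trunc (d - 1) ` S"
proof -
  obtain t where "t \<in> S" "\<forall>v. length v < d - 1 \<longrightarrow> t v = s (i # v)"
    using S_essential[OF assms] by blast
  then show ?thesis by (intro image_eqI[of _ _ t]) (auto simp: trunc_def shift_def)
qed

end

lemma eq_if_child_windows_eq:
  assumes "1 \<le> k" and f: "f \<in> supported_on {v. length v = k}" and g: "g \<in> supported_on {v. length v = k}"
    and windows: "\<And>i. trunc k (shift f [i]) = trunc k (shift g [i])"
  shows "f = g"
proof
  fix v show "f v = g v"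
  proof (cases v)
    case (Cons i v')
    show ?thesis
    proof (cases "length v' < k")
      case True
      then show ?thesis using fun_cong[OF windows[of i], of v'] Cons by (simp add: trunc_def shift_def)
    qed (use f g Cons in \<open>auto simp: supported_on_def\<close>)
  qed (use assms in \<open>auto simp: supported_on_def\<close>)
qed

lemma card_subgroup_le_half:
  fixes K F :: "'a::ab_group_add set"
  assumes "finite F" "K \<subseteq> F" and diff: "\<And>x y. x \<in> K \<Longrightarrow> y \<in> K \<Longrightarrow> x - y \<in> K"
    and a: "a \<in> F" "a \<notin> K" and shift: "\<And>x. x \<in> K \<Longrightarrow> x + a \<in> F"
  shows "2 * card K \<le> card F"
proof -
  let ?T = "(\<lambda>x. x + a) ` K"
  have "finite K" using assms(1,2) finite_subset by blast
  have "y - x \<noteq> a" if "x \<in> K" "y \<in> K" for x y using diff[OF that(2,1)] a(2) by auto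
  then have "?T \<inter> K = {}" by (force simp: algebra_simps)
  then have "card (?T \<union> K) = 2 * card K"
    using \<open>finite K\<close> by (simp add: card_Un_disjoint card_image)
  moreover have "card (?T \<union> K) \<le> card F" using assms(1,2) shift by (intro card_mono) auto
  ultimately show ?thesis by simp
qed

locale pattern_group_ge2 = pattern_group +
  assumes d_ge2: "2 \<le> d"
begin

sublocale restricted: pattern_group "d - 1" P_restr
  by unfold_locales (rule essential_pattern_group_P_restr[OF d_ge2])

lemma restricted_S_eq: "restricted.S = trunc (d - 1) ` S"
  unfolding restricted.S_def unfolding P_restr_eq_image_S by (simp add: image_image portrait_restr_aut_of)

definition child_windows :: "(bool list \<Rightarrow> bit) \<Rightarrow> (bool list \<Rightarrow> bit) \<times> (bool list \<Rightarrow> bit)" where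
  "child_windows l = (trunc (d - 1) (shift l [False]), trunc (d - 1) (shift l [True]))"

lemma S_last_supported: "S_last \<subseteq> supported_on {v. length v = d - 1}"
  using S_last_vanishes by (auto simp: supported_on_def)

lemma child_windows_eq_iff:
  assumes "f \<in> supported_on {v. length v = d - 1}" "g \<in> supported_on {v. length v = d - 1}"
  shows "child_windows f = child_windows g \<longleftrightarrow> f = g"
proof
  assume "child_windows f = child_windows g"
  then have "trunc (d - 1) (shift f [i]) = trunc (d - 1) (shift g [i])" for i
    by (cases i) (simp_all add: child_windows_def)
  then show "f = g" using eq_if_child_windows_eq[OF _ assms] d_ge2 by simp
qed simp

lemma child_windows_S_last:
  assumes "l \<in> S_last" shows "child_windows l \<in> restricted.S_last \<times> restricted.S_last"
proof -
  have "trunc (d - 1) (shift l [i]) \<in> restricted.S_last" for i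
    unfolding restricted.S_last_def restricted_S_eq
    using assms trunc_shift_S_in_restriction[of l i] by (auto simp: S_last_def trunc_def shift_def)
  then show ?thesis by (simp add: child_windows_def)
qed

lemma inj_on_child_windows: "inj_on child_windows S_last"
  using child_windows_eq_iff S_last_supported by (meson inj_onI subsetD)

lemma child_windows_surj_if_card:
  assumes "card restricted.S_last ^ 2 \<le> card S_last"
  shows "child_windows ` S_last = restricted.S_last \<times> restricted.S_last"
proof (rule card_subset_eq)
  show "finite (restricted.S_last \<times> restricted.S_last)" using restricted.finite_S_last by simp
  show "child_windows ` S_last \<subseteq> restricted.S_last \<times> restricted.S_last"
    using child_windows_S_last by blast
  then have "card (child_windows ` S_last) \<le> card (restricted.S_last \<times> restricted.S_last)"
    using restricted.finite_S_last by (intro card_mono) auto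
  moreover have "card (child_windows ` S_last) = card S_last" by (rule card_image[OF inj_on_child_windows])
  ultimately show "card (child_windows ` S_last) = card (restricted.S_last \<times> restricted.S_last)"
    using assms by (simp add: card_cartesian_product power2_eq_square)
qed

lemma S_if_restrictions_in_S:
  assumes surj: "child_windows ` S_last = restricted.S_last \<times> restricted.S_last"
    and t_supp: "\<And>v. d \<le> length v \<Longrightarrow> t v = 0"
    and t_top: "trunc (d - 1) t \<in> restricted.S"
    and t_children: "\<And>i. trunc (d - 1) (shift t [i]) \<in> restricted.S"
  shows "t \<in> S"
proof -
  obtain s where s: "s \<in> S" "trunc (d - 1) s = trunc (d - 1) t"
    using t_top by (auto simp: restricted_S_eq)
  have st: "length v < d - 1 \<Longrightarrow> s v = t v" for v
    using fun_cong[OF s(2), of v] by (simp add: trunc_def)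
  define y where "y v = t v + s v" for v
  have y_supp: "y \<in> supported_on {v. length v = d - 1}"
    using st t_supp S_vanishes[OF s(1)] d_ge2
    by (auto simp: supported_on_def y_def linorder_neq_iff not_le)
  have "trunc (d - 1) (shift y [i]) \<in> restricted.S_last" for i
    unfolding y_def trunc_shift_add using t_children trunc_shift_S_in_restriction[OF s(1)] st
    by (intro restricted.S_add_in_S_last) (auto simp: restricted_S_eq trunc_def shift_def)
  then have "child_windows y \<in> restricted.S_last \<times> restricted.S_last"
    by (simp add: child_windows_def)
  then have "child_windows y \<in> child_windows ` S_last" by (simp only: surj)
  then have "y \<in> S_last"
    using child_windows_eq_iff y_supp S_last_supported by blast
  then have "(\<lambda>v. s v + y v) \<in> S" by (rule S_add_S_last[OF s(1)])
  moreover have "(\<lambda>v. s v + y v) = t" by (auto simp: y_def fun_eq_iff add.left_commute)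
  ultimately show ?thesis by simp
qed

lemma GP_eq_restricted_if_child_windows_surj:
  assumes surj: "child_windows ` S_last = restricted.S_last \<times> restricted.S_last"
  shows "GP d P = GP (d - 1) P_restr"
proof -
  have "admissible d S = admissible (d - 1) restricted.S"
  proof (intro equalityI subsetI)
    fix f assume "f \<in> admissible d S"
    then have "trunc (d - 1) (trunc d (shift f w)) \<in> restricted.S" for w
      by (auto simp: admissible_def restricted_S_eq)
    then show "f \<in> admissible (d - 1) restricted.S" by (simp add: admissible_def trunc_trunc)
  next
    fix f assume f: "f \<in> admissible (d - 1) restricted.S"
    have "trunc d (shift f w) \<in> S" for w
    proof (rule S_if_restrictions_in_S[OF surj])
      show "trunc (d - 1) (trunc d (shift f w)) \<in> restricted.S"
        using f by (simp add: admissible_def trunc_trunc)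
      have "trunc (d - 1) (shift (trunc d (shift f w)) [i]) = trunc (d - 1) (shift f (w @ [i]))" for i
        by (auto simp: trunc_def shift_def fun_eq_iff)
      then show "trunc (d - 1) (shift (trunc d (shift f w)) [i]) \<in> restricted.S" for i
        using f by (simp add: admissible_def)
    qed (simp add: trunc_def)
    then show "f \<in> admissible d S" by (simp add: admissible_def)
  qed
  then show ?thesis unfolding GP_eq_image_admissible restricted.GP_eq_image_admissible by simp
qed

lemma next_to_last_level_full:
  assumes card: "card S_last = 2 ^ (2 ^ (d - 1) - 2)" and minimal: "GP d P \<noteq> GP (d - 1) P_restr"
    and k: "k \<in> supported_on {v. length v = d - 2}"
  shows "k \<in> restricted.S"
proof (rule ccontr)
  assume k_notin: "k \<notin> restricted.S"
  let ?F = "supported_on {v :: bool list. length v = d - 2}"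
  have "2 * card restricted.S_last \<le> card ?F"
  proof (rule card_subgroup_le_half)
    show "finite ?F" by (rule finite_supported_on[OF finite_words_eq])
    show "restricted.S_last \<subseteq> ?F"
      using restricted.S_last_vanishes by (auto simp: supported_on_def)
    show "x - y \<in> restricted.S_last" if "x \<in> restricted.S_last" "y \<in> restricted.S_last" for x y
      using restricted.S_last_add[OF that] by (simp add: fun_diff_def)
    show "k \<notin> restricted.S_last" using k_notin unfolding restricted.S_last_def by blast
    show "x + k \<in> ?F" if "x \<in> restricted.S_last" for x
      using that k restricted.S_last_vanishes by (auto simp: supported_on_def)
  qed (rule k)
  moreover have "card ?F = 2 * 2 ^ (2 ^ (d - 2) - 1)"
    using card_supported_on[OF finite_words_eq] card_words_eq by (simp flip: power_Suc)
  ultimately have "card restricted.S_last \<le> 2 ^ (2 ^ (d - 2) - 1)" by simp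
  then have "card restricted.S_last ^ 2 \<le> (2 ^ (2 ^ (d - 2) - 1)) ^ 2" by (rule power_mono) simp
  also have "\<dots> = card S_last"
  proof -
    have "2 ^ (d - 1) = 2 * (2::nat) ^ (d - 2)" using d_ge2 by (simp flip: power_Suc)
    then have "2 * (2 ^ (d - 2) - 1) = 2 ^ (d - 1) - (2::nat)" by simp
    then show ?thesis using card by (simp flip: power_mult add: mult.commute)
  qed
  finally have "GP d P = GP (d - 1) P_restr"
    by (intro GP_eq_restricted_if_child_windows_surj child_windows_surj_if_card)
  with minimal show False ..
qed

end

section \<open>Realizing all portraits below the last level\<close>

context pattern_group
begin

definition level_realized :: "nat \<Rightarrow> bool" where
  "level_realized j \<longleftrightarrow> (\<forall>k \<in> supported_on {v. length v = j}. \<exists>s\<in>S. trunc (Suc j) s = k)"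

text \<open>A labelling of level \<open>j\<close> is realized inside the left subtree of a pattern whose
  level \<open>j + 1\<close> is realized; essentiality moves it up to the root.\<close>

lemma level_realized_Suc_imp:
  assumes "Suc j < d - 1" and "level_realized (Suc j)" shows "level_realized j"
  unfolding level_realized_def
proof
  fix k :: "bool list \<Rightarrow> bit" assume k: "k \<in> supported_on {v. length v = j}"
  define k' where "k' v = (case v of [] \<Rightarrow> 0 | x # v' \<Rightarrow> if x then 0 else k v')" for v
  have "k' \<in> supported_on {v. length v = Suc j}"
    using k by (auto simp: supported_on_def k'_def split: list.split)
  then obtain s where s: "s \<in> S" "trunc (Suc (Suc j)) s = k'"
    using assms(2) by (auto simp: level_realized_def)
  obtain t where t: "t \<in> S" "\<forall>v. length v < d - 1 \<longrightarrow> t v = s (False # v)"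
    using S_essential[OF s(1)] by blast
  have "trunc (Suc j) t v = k v" for v
  proof (cases "length v < Suc j")
    case True
    then have "t v = trunc (Suc (Suc j)) s (False # v)" using t(2) assms(1) by (simp add: trunc_def)
    then show ?thesis using True fun_cong[OF s(2), of "False # v"] by (simp add: trunc_def k'_def)
  qed (use k in \<open>auto simp: trunc_def supported_on_def\<close>)
  then show "\<exists>s\<in>S. trunc (Suc j) s = k" using t(1) by blast
qed

lemma level_realized_below:
  assumes "level_realized m" "j \<le> m" "m < d - 1" shows "level_realized j"
  using assms(2,1,3)
proof (induction j rule: inc_induct)
  case (step n)
  then show ?case using level_realized_Suc_imp by simp
qed

lemma trunc_S_realizes_all:
  assumes realized: "\<And>j. j < m \<Longrightarrow> level_realized j"
    and \<sigma>: "\<sigma> \<in> supported_on {v. length v < m}"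
  shows "\<exists>s\<in>S. trunc m s = \<sigma>"
  using assms
proof (induction m arbitrary: \<sigma>)
  case 0
  then have "\<sigma> = (\<lambda>_. 0)" by (auto simp: supported_on_def)
  then show ?case using zero_in_S by (auto simp: trunc_def)
next
  case (Suc j)
  have "trunc j \<sigma> \<in> supported_on {v. length v < j}" by (auto simp: supported_on_def trunc_def)
  then obtain s where s: "s \<in> S" "trunc j s = trunc j \<sigma>" using Suc by auto
  define k where "k v = (if length v = j then \<sigma> v + s v else 0)" for v
  have "k \<in> supported_on {v. length v = j}" by (auto simp: supported_on_def k_def)
  then obtain e where e: "e \<in> S" "trunc (Suc j) e = k"
    using Suc.prems(1)[of j] by (auto simp: level_realized_def)
  have e_low: "length v < j \<Longrightarrow> e v = 0" for v
    using fun_cong[OF e(2), of v] by (simp add: trunc_def k_def)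
  have "trunc (Suc j) (pcomp s e) x = \<sigma> x" for x
  proof (cases "length x < Suc j")
    case True
    then have "aut_of e x = x" using e_low by (intro aut_of_vanishing_prefixes) auto
    then have "pcomp s e x = e x + s x" by (rule pcomp_apply_fixed)
    moreover have "e x = k x" using fun_cong[OF e(2), of x] True by (simp add: trunc_def)
    moreover have "length x < j \<Longrightarrow> s x = \<sigma> x" using fun_cong[OF s(2), of x] by (simp add: trunc_def)
    ultimately show ?thesis using True by (auto simp: trunc_def k_def add.commute)
  qed (use Suc.prems(2) in \<open>auto simp: trunc_def supported_on_def\<close>)
  then show ?case using pcomp_in_S[OF s(1) e(1)] by blast
qed

end

definition leaves :: "nat \<Rightarrow> bool list \<Rightarrow> bool list set" where
  "leaves n u = {v. length v = n \<and> prefix u v}"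

definition balanced :: "nat \<Rightarrow> (bool list \<Rightarrow> bit) set" where
  "balanced n = {z \<in> supported_on (leaves n []).
     sum z (leaves n [False]) = 0 \<and> sum z (leaves n [True]) = 0}"

lemma leaves_Nil: "leaves n [] = {v. length v = n}"
  by (simp add: leaves_def)

lemma finite_leaves: "finite (leaves n u)"
  by (rule finite_subset[OF _ finite_words_eq[of n]]) (auto simp: leaves_def)

lemma leaves_full_length: "length u = n \<Longrightarrow> leaves n u = {u}"
  by (auto simp: leaves_def prefix_def)

lemma leaves_split:
  assumes "length u < n"
  shows "leaves n u = leaves n (u @ [False]) \<union> leaves n (u @ [True])"
    and "leaves n (u @ [False]) \<inter> leaves n (u @ [True]) = {}"
proof -
  show "leaves n (u @ [False]) \<inter> leaves n (u @ [True]) = {}"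
    by (auto simp: leaves_def prefix_def)
  have "v \<in> leaves n (u @ [False]) \<union> leaves n (u @ [True])" if "v \<in> leaves n u" for v
  proof -
    from that obtain r where r: "v = u @ r" "length v = n" unfolding leaves_def prefix_def by blast
    with assms obtain b r' where "r = b # r'" by (cases r) auto
    with r show ?thesis by (cases b) (auto simp: leaves_def prefix_def)
  qed
  then show "leaves n u = leaves n (u @ [False]) \<union> leaves n (u @ [True])"
    by (auto simp: leaves_def prefix_def)
qed

lemma sum_leaves_split:
  "length u < n \<Longrightarrow> sum z (leaves n u) = sum z (leaves n (u @ [False])) + sum z (leaves n (u @ [True]))"
  using leaves_split finite_leaves by (simp add: sum.union_disjoint)

lemma aut_of_leaves:
  assumes "aut_of s u = u'" "length u \<le> n"
  shows "aut_of s ` leaves n u = leaves n u'"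
proof (intro equalityI subsetI)
  fix y assume "y \<in> aut_of s ` leaves n u"
  then obtain v where "v \<in> leaves n u" "y = aut_of s v" by blast
  then show "y \<in> leaves n u'" using assms prefix_aut_of by (auto simp: leaves_def)
next
  fix y assume y: "y \<in> leaves n u'"
  obtain v where v: "aut_of s v = y" using surj_aut_of[of s] by (metis surjD)
  have "aut_of s (take (length u) v) = aut_of s u"
    using y v assms by (auto simp: take_aut_of[symmetric] leaves_def prefix_def)
  then have "prefix u v" using inj_aut_of[of s] by (metis injD take_is_prefix)
  with y v show "y \<in> aut_of s ` leaves n u" by (auto simp: leaves_def)
qed

lemma sum_leaves_aut_of:
  assumes "aut_of s u = u'" "length u \<le> n"
  shows "sum (\<lambda>v. z (aut_of s v)) (leaves n u) = sum z (leaves n u')"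
proof -
  have "sum z (leaves n u') = sum z (aut_of s ` leaves n u)" using aut_of_leaves[OF assms] by simp
  also have "\<dots> = sum (z \<circ> aut_of s) (leaves n u)"
    by (rule sum.reindex) (rule inj_on_subset[OF inj_aut_of subset_UNIV])
  finally show ?thesis by (simp add: comp_def)
qed

lemma sum_leaves_zero_above:
  assumes zero: "\<And>u. length u = j \<Longrightarrow> sum z (leaves n u) = 0" and "length u \<le> j" "j \<le> n"
  shows "sum z (leaves n u) = 0"
  using assms(2)
proof (induction "j - length u" arbitrary: u)
  case 0
  then show ?case using zero by simp
next
  case (Suc k)
  then have "sum z (leaves n (u @ [b])) = 0" for b by simp
  moreover have "length u < n" using Suc.hyps assms(3) by simp
  ultimately show ?case by (simp add: sum_leaves_split)
qed

lemma supported_leaves_split: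
  assumes "length u < n" "z \<in> supported_on (leaves n u)"
  shows "z = (\<lambda>v. (if v \<in> leaves n (u @ [False]) then z v else 0)
                 + (if v \<in> leaves n (u @ [True]) then z v else 0))"
  using assms leaves_split[OF assms(1)] by (auto simp: supported_on_def fun_eq_iff)

text \<open>Flipping the value at a point of \<open>A\<close> exchanges even and odd sums over \<open>A\<close>.\<close>

lemma card_even_sum:
  fixes X :: "('a \<Rightarrow> bit) set"
  assumes X: "finite X" and A: "finite A" "a \<in> A" and flip: "\<And>z. z \<in> X \<Longrightarrow> z(a := z a + 1) \<in> X"
  shows "2 * card {z\<in>X. sum z A = 0} = card X"
proof -
  let ?flip = "\<lambda>z x. z x + (if x = a then 1 else 0) :: bit"
  let ?E = "{z\<in>X. sum z A = 0}" and ?O = "{z\<in>X. sum z A = 1}"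
  have flip_X: "?flip z \<in> X" if "z \<in> X" for z
  proof -
    have "?flip z = z(a := z a + 1)" by (rule ext) simp
    then show ?thesis using flip[OF that] by simp
  qed
  have sum_flip: "sum (?flip z) A = sum z A + 1" for z
    using A by (simp add: sum.distrib)
  have "bij_betw ?flip ?E ?O"
    by (rule bij_betw_byWitness[where f' = ?flip]) (auto simp: sum_flip flip_X add.assoc)
  then have "card ?E = card ?O" by (rule bij_betw_same_card)
  moreover have "X = ?E \<union> ?O" using bit_zero_or_one by blast
  moreover have "card (?E \<union> ?O) = card ?E + card ?O"
    using X by (intro card_Un_disjoint) auto
  ultimately show ?thesis by simp
qed

lemma finite_balanced: "finite (balanced n)"
  by (rule finite_subset[OF _ finite_supported_on[OF finite_leaves]]) (auto simp: balanced_def)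

lemma card_balanced:
  assumes "1 \<le> n" shows "card (balanced n) = 2 ^ (2 ^ n - 2)"
proof -
  define X0 where "X0 = supported_on (leaves n [])"
  define X1 where "X1 = {z \<in> X0. sum z (leaves n [False]) = 0}"
  define a where "a = False # replicate (n - 1) False"
  define b where "b = True # replicate (n - 1) False"
  have ab: "a \<in> leaves n [False]" "b \<in> leaves n [True]" "b \<notin> leaves n [False]" "a \<in> leaves n []" "b \<in> leaves n []"
    using assms by (auto simp: leaves_def a_def b_def)
  have fin: "finite X0" using finite_supported_on[OF finite_leaves] by (simp add: X0_def)
  have "2 * card X1 = card X0"
    unfolding X1_def using ab by (intro card_even_sum fin finite_leaves) (auto simp: X0_def supported_on_def)
  moreover have "2 * card {z \<in> X1. sum z (leaves n [True]) = 0} = card X1"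
  proof (rule card_even_sum[OF _ finite_leaves ab(2)])
    show "finite X1" using fin by (simp add: X1_def)
    have "sum (z(b := x)) (leaves n [False]) = sum z (leaves n [False])" for z :: "bool list \<Rightarrow> bit" and x
      using ab(3) by (intro sum.cong) auto
    then show "z(b := z b + 1) \<in> X1" if "z \<in> X1" for z
      using that ab by (auto simp: X1_def X0_def supported_on_def)
  qed
  moreover have "{z \<in> X1. sum z (leaves n [True]) = 0} = balanced n"
    by (auto simp: X1_def X0_def balanced_def)
  moreover have "card X0 = 2 ^ 2 ^ n"
    using card_supported_on[OF finite_words_eq] card_words_eq by (simp add: X0_def leaves_Nil)
  moreover have "(2::nat) ^ 2 ^ n = 4 * 2 ^ (2 ^ n - 2)"
  proof -
    have "(2::nat) \<le> 2 ^ n" using assms power_increasing[of 1 n "2::nat"] by simp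
    then show ?thesis by (metis le_add_diff_inverse power_add power2_eq_square numeral_Bit0 mult_2)
  qed
  ultimately show ?thesis by simp
qed

locale saturated_pattern_group = pattern_group_ge2 +
  assumes realizes_top: "\<sigma> \<in> supported_on {v. length v < d - 1} \<Longrightarrow> \<exists>s\<in>S. trunc (d - 1) s = \<sigma>"
    and card_S_last: "card S_last = 2 ^ (2 ^ (d - 1) - 2)"
begin

abbreviation below :: "bool list \<Rightarrow> bool list set" where
  "below u \<equiv> leaves (d - 1) u"

lemma realizes_top_below:
  assumes "\<sigma> \<in> supported_on {v. length v < d - 1}"
  shows "\<exists>s\<in>S. \<forall>v. length v < d - 1 \<longrightarrow> s v = \<sigma> v"
  using realizes_top[OF assms] by (metis trunc_def)

lemma card_balanced_eq: "card (balanced (d - 1)) = card S_last"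
proof -
  have "1 \<le> d - 1" using d_ge2 by simp
  then show ?thesis using card_balanced card_S_last by simp
qed

lemma S_last_supported_below: "S_last \<subseteq> supported_on (below [])"
  using S_last_vanishes by (auto simp: supported_on_def leaves_def)

lemma S_last_comp_aut_of:
  assumes s: "s \<in> S" and z: "z \<in> S_last" shows "(\<lambda>v. z (aut_of s v)) \<in> S_last"
proof -
  have zS: "z \<in> S" using z by (simp add: S_last_def)
  have "(\<lambda>v. pcomp z s v + s v) \<in> S_last"
    using pcomp_in_S[OF zS s] s z by (intro S_add_in_S_last) (auto simp: pcomp_def S_last_def)
  moreover have "(\<lambda>v. pcomp z s v + s v) = (\<lambda>v. z (aut_of s v))"
    by (simp add: pcomp_def fun_eq_iff ac_simps)
  ultimately show ?thesis by simp
qed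

lemma S_maps_vertex:
  assumes "length u' = length u" "length u \<le> d - 1"
  shows "\<exists>s\<in>S. aut_of s u = u'"
proof -
  define \<sigma> :: "bool list \<Rightarrow> bit" where "\<sigma> x = (if prefix x u \<and> length x < length u \<and> u ! length x \<noteq> u' ! length x
    then 1 else 0)" for x
  have "\<sigma> \<in> supported_on {v. length v < d - 1}" using assms by (auto simp: supported_on_def \<sigma>_def)
  then obtain s where s: "s \<in> S" "\<And>v. length v < d - 1 \<Longrightarrow> s v = \<sigma> v"
    using realizes_top_below by blast
  have "aut_of s u = aut_of \<sigma> u" by (rule aut_of_cong) (use s(2) assms in auto)
  also have "aut_of \<sigma> u = u'"
    by (rule nth_equalityI) (use assms in \<open>auto simp: nth_aut_of \<sigma>_def take_is_prefix\<close>)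
  finally show ?thesis using s(1) by blast
qed

lemma S_swaps_children:
  assumes u: "length u < d - 1"
  shows "\<exists>e\<in>S. aut_of e (u @ [False]) = u @ [True] \<and> aut_of e (u @ [True]) = u @ [False]
    \<and> (\<forall>v. \<not> prefix u v \<longrightarrow> length v \<le> d - 1 \<longrightarrow> aut_of e v = v)"
proof -
  have "(\<lambda>x. if x = u then 1 else 0 :: bit) \<in> supported_on {v. length v < d - 1}"
    using u by (auto simp: supported_on_def)
  then obtain e where e: "e \<in> S" "\<And>v. length v < d - 1 \<Longrightarrow> e v = (if v = u then 1 else 0)"
    using realizes_top_below by blast
  have fix_e: "aut_of e v = v" if "\<And>k. k < length v \<Longrightarrow> take k v \<noteq> u" "length v \<le> d - 1" for v
    using that e(2) by (intro aut_of_vanishing_prefixes) auto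
  have "aut_of e u = u" using u by (intro fix_e) auto
  then have "aut_of e (u @ [b]) = u @ [\<not> b]" for b using e(2)[OF u] by (simp add: aut_of_snoc)
  moreover have "aut_of e v = v" if "\<not> prefix u v" "length v \<le> d - 1" for v
    using that by (intro fix_e) (auto simp: take_is_prefix)
  ultimately show ?thesis using e(1) by (intro bexI[of _ e]) auto
qed

lemma odd_below_transport:
  assumes "length u = length u'" "length u \<le> d - 1" "z \<in> S_last" "sum z (below u') = 1"
  shows "\<exists>z'\<in>S_last. sum z' (below u) = 1"
proof -
  obtain s where "s \<in> S" "aut_of s u = u'" using S_maps_vertex assms(1,2) by metis
  then show ?thesis
    using S_last_comp_aut_of assms(2-4) sum_leaves_aut_of by metis
qed

text \<open>Conjugating an odd labelling by the swap of the two children of \<open>u\<close> and adding it to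
  itself gives a labelling supported below \<open>u\<close> that is odd below both children.\<close>

lemma odd_below_children:
  assumes u: "length u < d - 1" and z: "z \<in> S_last" and odd: "sum z (below u) = 1"
  shows "\<exists>c\<in>S_last. (\<forall>v. v \<notin> below u \<longrightarrow> c v = 0)
    \<and> sum c (below (u @ [False])) = 1 \<and> sum c (below (u @ [True])) = 1"
proof -
  obtain e where e: "e \<in> S" "aut_of e (u @ [False]) = u @ [True]" "aut_of e (u @ [True]) = u @ [False]"
    "\<forall>v. \<not> prefix u v \<longrightarrow> length v \<le> d - 1 \<longrightarrow> aut_of e v = v"
    using S_swaps_children[OF u] by blast
  define c where "c v = z v + z (aut_of e v)" for v
  have "c \<in> S_last" unfolding c_def by (intro S_last_add z S_last_comp_aut_of e(1))
  moreover have "c v = 0" if "v \<notin> below u" for v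
    using that e(4) S_last_vanishes[OF z, of v] S_last_vanishes[OF z, of "aut_of e v"]
    by (cases "length v = d - 1") (auto simp: c_def leaves_def)
  moreover have "sum c (below (u @ [b])) = 1" for b
  proof -
    have "aut_of e (u @ [b]) = u @ [\<not> b]" using e(2,3) by (cases b) auto
    then have "sum c (below (u @ [b])) = sum z (below (u @ [b])) + sum z (below (u @ [\<not> b]))"
      using u by (simp add: c_def sum.distrib sum_leaves_aut_of)
    also have "\<dots> = 1" using odd sum_leaves_split[OF u, of z] by (cases b) (simp_all add: add.commute)
    finally show ?thesis .
  qed
  ultimately show ?thesis by blast
qed

definition S_last_contains_even :: "bool list \<Rightarrow> bool" where
  "S_last_contains_even u \<longleftrightarrow> (\<forall>z \<in> supported_on (below u). sum z (below u) = 0 \<longrightarrow> z \<in> S_last)"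

lemma S_last_contains_even_leaf:
  assumes "length u = d - 1" shows "S_last_contains_even u"
  unfolding S_last_contains_even_def
proof (intro ballI impI)
  fix z assume "z \<in> supported_on (below u)" "sum z (below u) = 0"
  then have "z = (\<lambda>_. 0)" using assms by (auto simp: leaves_full_length supported_on_def)
  then show "z \<in> S_last" using zero_in_S_last by simp
qed

lemma S_last_contains_even_children:
  assumes u: "length u < d - 1" and children: "\<And>b. S_last_contains_even (u @ [b])"
    and z: "z \<in> supported_on (below u)" and even: "\<And>b. sum z (below (u @ [b])) = 0"
  shows "z \<in> S_last"
proof -
  have "(\<lambda>v. if v \<in> below (u @ [b]) then z v else 0) \<in> S_last" for b
    using children[of b] even[of b] unfolding S_last_contains_even_def
    by (auto simp: supported_on_def if_distrib sum.If_cases finite_leaves)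
  then have "(\<lambda>v. (if v \<in> below (u @ [False]) then z v else 0)
      + (if v \<in> below (u @ [True]) then z v else 0)) \<in> S_last"
    by (intro S_last_add)
  then show ?thesis by (rule ssubst[OF supported_leaves_split[OF u z]])
qed

lemma S_last_contains_even_step:
  assumes u: "length u < d - 1" and children: "\<And>b. S_last_contains_even (u @ [b])"
    and odd: "\<exists>z\<in>S_last. sum z (below u) = 1"
  shows "S_last_contains_even u"
  unfolding S_last_contains_even_def
proof (intro ballI impI)
  obtain z0 where "z0 \<in> S_last" "sum z0 (below u) = 1" using odd by blast
  then obtain c where c: "c \<in> S_last" "\<forall>v. v \<notin> below u \<longrightarrow> c v = 0"
    "sum c (below (u @ [False])) = 1" "sum c (below (u @ [True])) = 1"
    using odd_below_children[OF u] by blast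
  fix z assume z: "z \<in> supported_on (below u)" and even: "sum z (below u) = 0"
  have split: "sum y (below (u @ [True])) = sum y (below u) + sum y (below (u @ [False]))"
    for y :: "bool list \<Rightarrow> bit"
    using sum_leaves_split[OF u, of y] by simp
  show "z \<in> S_last"
  proof (cases "sum z (below (u @ [False])) = 0")
    case True
    then have "sum z (below (u @ [b])) = 0" for b using even split[of z] by (cases b) simp_all
    then show ?thesis by (rule S_last_contains_even_children[OF u children z])
  next
    case False
    then have odd_z: "sum z (below (u @ [False])) = 1" by simp
    define w where "w v = z v + c v" for v
    have "w \<in> supported_on (below u)" using z c(2) by (auto simp: supported_on_def w_def)
    moreover have "sum w (below (u @ [b])) = 0" for b
      using odd_z even c(3,4) split[of z] by (cases b) (simp_all add: w_def sum.distrib)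
    ultimately have "w \<in> S_last" by (rule S_last_contains_even_children[OF u children])
    then have "(\<lambda>v. w v + c v) \<in> S_last" using c(1) by (rule S_last_add)
    then show ?thesis by (simp add: w_def add.assoc)
  qed
qed

lemma S_last_contains_even_all:
  assumes odd: "\<And>u. 1 \<le> length u \<Longrightarrow> length u < d - 1 \<Longrightarrow> \<exists>z\<in>S_last. sum z (below u) = 1"
    and "1 \<le> length u" "length u \<le> d - 1"
  shows "S_last_contains_even u"
  using assms(2,3)
proof (induction "d - 1 - length u" arbitrary: u)
  case 0
  then show ?case by (simp add: S_last_contains_even_leaf)
next
  case (Suc k)
  show ?case
  proof (rule S_last_contains_even_step)
    show "length u < d - 1" using Suc.hyps by simp
    show "S_last_contains_even (u @ [b])" for b using Suc by simp
    show "\<exists>z\<in>S_last. sum z (below u) = 1" using odd Suc by simp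
  qed
qed

text \<open>If all of \<open>S_last\<close> were even below a vertex of depth at least \<open>2\<close>, by transitivity it
  would be even below every vertex of depth \<open>2\<close>, which confines \<open>S_last\<close> to a proper subset of
  the balanced labellings, contradicting the count of \<open>S_last\<close>.\<close>

lemma odd_below_exists_deep:
  assumes u: "2 \<le> length u" "length u < d - 1"
  shows "\<exists>z\<in>S_last. sum z (below u) = 1"
proof (rule ccontr)
  assume no_odd: "\<not> ?thesis"
  have level: "sum z (below u') = 0" if "z \<in> S_last" "length u' = length u" for z u'
  proof (rule ccontr)
    assume "sum z (below u') \<noteq> 0"
    then show False using odd_below_transport[of u u' z] that u no_odd by auto
  qed
  have shallow: "sum z (below v) = 0" if "z \<in> S_last" "length v \<le> 2" for z v
    using sum_leaves_zero_above[of "length u" z "d - 1" v] level[OF that(1)] that(2) u by simp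
  define E where "E = {z \<in> balanced (d - 1). sum z (below [False, False]) = 0}"
  have "S_last \<subseteq> E"
    using shallow S_last_supported_below by (auto simp: E_def balanced_def)
  define a where "a = [False, False] @ replicate (d - 3) False"
  define b where "b = [False, True] @ replicate (d - 3) False"
  define w :: "bool list \<Rightarrow> bit" where "w v = (if v = a then 1 else 0) + (if v = b then 1 else 0)" for v
  have sum_w: "sum w A = (if a \<in> A then 1 else 0) + (if b \<in> A then 1 else 0)" if "finite A" for A
    using that by (simp add: w_def sum.distrib)
  have ab: "a \<in> below [False]" "b \<in> below [False]" "a \<notin> below [True]" "b \<notin> below [True]"
    "a \<in> below [False, False]" "b \<notin> below [False, False]" "a \<in> below []" "b \<in> below []"
    using u by (auto simp: leaves_def a_def b_def)
  moreover have "w \<in> supported_on (below [])" using ab by (auto simp: supported_on_def w_def)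
  ultimately have "w \<in> balanced (d - 1) - E" by (simp add: E_def balanced_def sum_w finite_leaves)
  moreover have "E \<subseteq> balanced (d - 1)" by (auto simp: E_def)
  ultimately have "card E < card (balanced (d - 1))"
    by (intro psubset_card_mono finite_balanced) blast
  moreover have "card S_last \<le> card E"
    using \<open>S_last \<subseteq> E\<close> finite_balanced by (intro card_mono) (auto simp: E_def)
  ultimately show False using card_balanced_eq by simp
qed

lemma S_last_eq_balanced: "S_last = balanced (d - 1)"
proof -
  have "S_last \<subseteq> balanced (d - 1)"
  proof
    fix z assume z: "z \<in> S_last"
    show "z \<in> balanced (d - 1)"
    proof (rule ccontr)
      assume z_unbalanced: "z \<notin> balanced (d - 1)"
      then obtain i where "sum z (below [i]) = 1"
        using z S_last_supported_below by (auto simp: balanced_def)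
      then have odd_top: "\<exists>z'\<in>S_last. sum z' (below [b]) = 1" for b
        using odd_below_transport[of "[b]" "[i]" z] z d_ge2 by simp
      have "\<exists>z\<in>S_last. sum z (below u) = 1" if "1 \<le> length u" "length u < d - 1" for u
      proof (cases "length u = 1")
        case True
        then obtain b where "u = [b]" by (cases u) auto
        then show ?thesis using odd_top by simp
      qed (use that odd_below_exists_deep in simp)
      then have "S_last_contains_even [b]" for b using S_last_contains_even_all d_ge2 by simp
      have "y \<in> S_last" if "y \<in> balanced (d - 1)" for y
      proof (rule S_last_contains_even_children[of "[]"])
        show "sum y (below ([] @ [b])) = 0" for b using that by (cases b) (simp_all add: balanced_def)
      qed (use that d_ge2 \<open>\<And>b. S_last_contains_even [b]\<close> in \<open>simp_all add: balanced_def\<close>)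
      then have "balanced (d - 1) \<subseteq> S_last" by blast
      then have "card (balanced (d - 1)) < card S_last"
        using z z_unbalanced finite_S_last by (intro psubset_card_mono) auto
      then show False using card_balanced_eq by simp
    qed
  qed
  then show ?thesis
    using card_balanced_eq finite_balanced by (intro card_subset_eq) auto
qed

definition parity :: "bool \<Rightarrow> (bool list \<Rightarrow> bit) \<Rightarrow> bit" where
  "parity i s = sum s (below [i])"

lemma parity_eq_if_eq_below:
  assumes "s \<in> S" "s' \<in> S" "\<And>v. length v < d - 1 \<Longrightarrow> s v = s' v"
  shows "parity i s = parity i s'"
proof -
  have "(\<lambda>v. s v + s' v) \<in> balanced (d - 1)"
    using S_add_in_S_last[OF assms] S_last_eq_balanced by simp
  then have "parity i s + parity i s' = 0"
    by (cases i) (simp_all add: balanced_def parity_def sum.distrib)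
  then show ?thesis by (metis add_0_right bit_add_self_left)
qed

lemma parity_vanishing_below:
  assumes "s \<in> S" "\<And>v. length v < d - 1 \<Longrightarrow> s v = 0" shows "parity i s = 0"
  using parity_eq_if_eq_below[OF assms(1) zero_in_S] assms(2) by (simp add: parity_def)

lemma parity_pcomp:
  assumes "t \<in> S" shows "parity i (pcomp s t) = parity i t + parity (i \<noteq> (t [] = 1)) s"
proof -
  have "sum (\<lambda>v. s (aut_of t v)) (below [i]) = sum s (below [i \<noteq> (t [] = 1)])"
    using d_ge2 by (intro sum_leaves_aut_of) auto
  then show ?thesis by (simp add: pcomp_def parity_def sum.distrib)
qed

text \<open>Removing the deepest vertex \<open>v\<close> in the support of the top of a pattern: composing the
  remaining part with an element whose top is concentrated at \<open>v\<close> restores the top,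
  because that element only moves vertices below \<open>v\<close>, where the remaining part vanishes.\<close>

lemma parity_remove_deepest:
  assumes s: "s \<in> S" and v: "length v < d - 1" "s v = 1"
    and deepest: "\<And>x. length x < d - 1 \<Longrightarrow> s x \<noteq> 0 \<Longrightarrow> length x \<le> length v"
    and e: "e \<in> S" "\<And>x. length x < d - 1 \<Longrightarrow> e x = (if x = v then 1 else 0)"
  shows "\<exists>r\<in>S. (\<forall>x. length x < d - 1 \<longrightarrow> r x = (if x = v then 0 else s x))
    \<and> (\<forall>i. parity i s = parity i r + parity i e)"
proof -
  have "(\<lambda>x. if length x < d - 1 \<and> x \<noteq> v then s x else 0) \<in> supported_on {x. length x < d - 1}"
    by (auto simp: supported_on_def)
  then obtain r where r: "r \<in> S" "\<And>x. length x < d - 1 \<Longrightarrow> r x = (if x = v then 0 else s x)"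
    using realizes_top_below by fastforce
  have "pcomp r e x = s x" if x: "length x < d - 1" for x
  proof (cases "length x \<le> length v")
    case True
    then have "aut_of e x = x" using e(2) x by (intro aut_of_vanishing_prefixes) auto
    then show ?thesis using e(2) r(2) x v(2) by (simp add: pcomp_apply_fixed)
  next
    case False
    have "s x = 0" using deepest[of x] x False by fastforce
    moreover have "s (aut_of e x) = 0" using deepest[of "aut_of e x"] x False by fastforce
    ultimately show ?thesis using e(2) r(2) x False by (auto simp: pcomp_def)
  qed
  then have "parity i s = parity i e + parity (i \<noteq> (e [] = 1)) r" for i
    using parity_eq_if_eq_below[OF s pcomp_in_S[OF r(1) e(1)]] parity_pcomp[OF e(1)] by simp
  moreover have "parity (i \<noteq> (e [] = 1)) r = parity i r" for i
  proof (cases "v = []")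
    case True
    then have "r x = 0" if "length x < d - 1" for x
      using that r(2) deepest[of x] bit_zero_or_one[of "s x"] by auto
    then show ?thesis using parity_vanishing_below[OF r(1)] by simp
  qed (use e(2) d_ge2 in simp)
  ultimately have "parity i s = parity i r + parity i e" for i by (simp add: add.commute)
  then show ?thesis using r by (intro bexI[of _ r]) auto
qed

lemma parity_linear:
  assumes E: "\<And>v. length v < d - 1 \<Longrightarrow> E v \<in> S \<and> (\<forall>x. length x < d - 1 \<longrightarrow> E v x = (if x = v then 1 else 0))"
    and s: "s \<in> S"
  shows "parity i s = (\<Sum>v | length v < d - 1. s v * parity i (E v))"
  using s
proof (induction "card {v. length v < d - 1 \<and> s v \<noteq> 0}" arbitrary: s)
  case 0
  then have "s v = 0" if "length v < d - 1" for v
    using that finite_subset[OF _ finite_words_less[of "d - 1"]] by (auto simp: card_eq_0_iff)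
  then show ?case using parity_vanishing_below[OF 0(2)] by simp
next
  case (Suc n)
  let ?A = "{v. length v < d - 1 \<and> s v \<noteq> 0}"
  have fin: "finite ?A" using finite_subset[OF _ finite_words_less[of "d - 1"]] by auto
  moreover have "card ?A \<noteq> 0" using Suc.hyps(2) by simp
  ultimately have "?A \<noteq> {}" by auto
  then have "Max (length ` ?A) \<in> length ` ?A" by (intro Max_in finite_imageI fin) simp
  then obtain v where v_max: "Max (length ` ?A) = length v" and v: "v \<in> ?A" by (rule imageE)
  have deepest: "length x \<le> length v" if "length x < d - 1" "s x \<noteq> 0" for x
    using that fin v_max[symmetric] by simp
  have "\<exists>r\<in>S. (\<forall>x. length x < d - 1 \<longrightarrow> r x = (if x = v then 0 else s x))
      \<and> (\<forall>j. parity j s = parity j r + parity j (E v))"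
    using v E[of v] by (intro parity_remove_deepest[OF Suc.prems _ _ deepest]) auto
  then obtain r where r: "r \<in> S" "\<forall>x. length x < d - 1 \<longrightarrow> r x = (if x = v then 0 else s x)"
    "\<And>j. parity j s = parity j r + parity j (E v)"
    by blast
  have "{x. length x < d - 1 \<and> r x \<noteq> 0} = ?A - {v}" using r(2) by (auto split: if_splits)
  then have "n = card {x. length x < d - 1 \<and> r x \<noteq> 0}" using Suc.hyps(2) fin v by simp
  then have IH: "parity i r = (\<Sum>x | length x < d - 1. r x * parity i (E x))" using Suc.hyps(1) r(1) by blast
  have "(\<Sum>x | length x < d - 1. s x * parity i (E x))
      = (\<Sum>x | length x < d - 1. r x * parity i (E x) + (if x = v then parity i (E x) else 0))"
    using r(2) v by (intro sum.cong) auto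
  also have "\<dots> = (\<Sum>x | length x < d - 1. r x * parity i (E x)) + parity i (E v)"
    using v finite_words_less by (simp add: sum.distrib)
  finally show ?case using r(3) IH by simp
qed

lemma elementary_patterns:
  "\<exists>E. \<forall>v. length v < d - 1 \<longrightarrow>
     E v \<in> S \<and> (\<forall>x. length x < d - 1 \<longrightarrow> E v x = (if x = v then 1 else 0))"
proof (rule choice, rule allI)
  fix v :: "bool list"
  have "(\<lambda>x. if x = v then 1 else 0 :: bit) \<in> supported_on {x. length x < d - 1}"
    if "length v < d - 1" using that by (auto simp: supported_on_def)
  then show "\<exists>e. length v < d - 1 \<longrightarrow>
      e \<in> S \<and> (\<forall>x. length x < d - 1 \<longrightarrow> e x = (if x = v then 1 else 0))"
    using realizes_top_below by blast
qed

lemma parity_additive: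
  assumes s: "s \<in> S" and t: "t \<in> S" and r: "r \<in> S" "\<And>x. length x < d - 1 \<Longrightarrow> r x = s x + t x"
  shows "parity i r = parity i s + parity i t"
proof -
  obtain E where E: "\<And>v. length v < d - 1 \<Longrightarrow>
      E v \<in> S \<and> (\<forall>x. length x < d - 1 \<longrightarrow> E v x = (if x = v then 1 else 0))"
    using elementary_patterns by blast
  have "(\<Sum>x | length x < d - 1. r x * parity i (E x))
      = (\<Sum>x | length x < d - 1. s x * parity i (E x)) + (\<Sum>x | length x < d - 1. t x * parity i (E x))"
    using r(2) by (simp add: sum.distrib distrib_right)
  then show ?thesis
    using parity_linear[OF E s] parity_linear[OF E t] parity_linear[OF E r(1)] by simp
qed

theorem S_additive:
  assumes s: "s \<in> S" and t: "t \<in> S" shows "(\<lambda>v. s v + t v) \<in> S"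
proof -
  obtain r where r: "r \<in> S" "\<forall>x. length x < d - 1 \<longrightarrow> r x = s x + t x"
    using realizes_top_below[of "\<lambda>x. if length x < d - 1 then s x + t x else 0"]
    by (auto simp: supported_on_def)
  define y where "y v = s v + t v + r v" for v
  have "parity i y = parity i s + parity i t + parity i r" for i
    by (simp add: y_def parity_def sum.distrib)
  then have "parity i y = 0" for i using parity_additive[OF s t r(1)] r(2) by simp
  moreover have "y \<in> supported_on (below [])"
    using r(2) S_vanishes[OF s] S_vanishes[OF t] S_vanishes[OF r(1)]
    by (auto simp: supported_on_def leaves_def y_def linorder_neq_iff)
  ultimately have "y \<in> S_last"
    by (simp add: S_last_eq_balanced balanced_def parity_def)
  then have "(\<lambda>v. r v + y v) \<in> S" by (rule S_add_S_last[OF r(1)])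
  moreover have "(\<lambda>v. r v + y v) = (\<lambda>v. s v + t v)" by (simp add: y_def fun_eq_iff ac_simps)
  ultimately show ?thesis by simp
qed

end

theorem theorem4:
  fixes d :: nat and P :: "(bool list \<Rightarrow> bool list) set"
  assumes "2 \<le> d"
    and "essential_pattern_group d P"
    and "defined_by_patterns_of_size d (GP d P)"
    and "Hdim (GP d P) = ereal (1 - 2 / 2 ^ (d - 1))"
  shows "additive_portraits (GP d P)"
proof -
  interpret pattern_group_ge2 d P
    using assms(1,2) by (simp add: pattern_group_ge2_def pattern_group_ge2_axioms_def pattern_group_def)
  have card: "card S_last = 2 ^ (2 ^ (d - 1) - 2)" by (rule card_S_last_if_Hdim[OF assms(1,4)])
  have minimal: "GP d P \<noteq> GP (d - 1) P_restr"
    using assms(1,3) essential_pattern_group_P_restr[OF assms(1)]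
    by (auto simp: defined_by_patterns_of_size_def)
  have "level_realized (d - 2)"
    using next_to_last_level_full[OF card minimal] assms(1)
    by (auto simp: level_realized_def restricted_S_eq Suc_diff_Suc numeral_2_eq_2)
  then have "level_realized j" if "j < d - 1" for j
    using level_realized_below[of "d - 2" j] that by simp
  then interpret saturated_pattern_group d P
    using trunc_S_realizes_all card by unfold_locales blast+
  show ?thesis using S_additive by (rule additive_portraits_GP_if_S_additive)
qed

end
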